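(* Let $S$ be an $\mathcal L$-definable set and $n\ge 1$. Let $\Delta_n=\{(\lambda,\dots,\lambda)\in\mathbb Z^n:\lambda\in\mathbb N\}$ (with $\mathbb N=\{0,1,2,\dots\}$). Then in the ring $R_S$, $$(p^n-1)\cdot[P(S\times\Delta_n)]=1.$$
   Context: Fix a prime $p$. $\mathcal L=\{+,\cdot,\mathcal O\}$ is the language of valued fields (ring operations and a unary predicate interpreted as the valuation ring $\mathbb Z_p$). An $\mathcal L$-definable set is a subset of some $\mathbb Q_p^n$ defined by a parameter-free $\mathcal L$-formula; a function is $\mathcal L$-definable if its graph is. $\mu$ denotes the Haar measure on $\mathbb Q_p^n$ normalized so that $\mu(\mathbb Z_p^n)=1$. For $X\subseteq S\times\mathbb Q_p^n$ and $s\in S$ write $X_s=\{x\in\mathbb Q_p^n:(s,x)\in X\}$. Definition of $R_S$: $R_S$ is the abelian group generated by symbols $[X]$, for all $\mathcal L$-definable $X\subseteq S\times\mathbb Q_p^n$ ($n\ge 0$ arbitrary) such that $\mu(X_s)<\infty$ for all $s\in S$, modulo the relations: (R1) $[X_1\cup X_2]=[X_1]+[X_2]$ for disjoint such $X_1,X_2\subseteq S\times\mathbb Q_p^n$; (R2) $[X]=0$ whenever $X\subseteq S\times\mathbb Q_p^n$ and $\dim X_s<n$ for every $s\in S$; (R3) $[X]=[Y]$ whenever $X,Y\subseteq S\times\mathbb Q_p^n$ and there is an $\mathcal L$-definable bijection $\phi:X\to Y$ inducing for each $s\in S$ a bijection $\phi_s:X_s\to Y_s$ such that $X_s,Y_s$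 are open in $\mathbb Q_p^n$, $\phi_s$ is $C^1$, and the $p$-adic norm of the Jacobian determinant of $\phi_s$ equals $1$ everywhere; (R4) $[X]=[X\times\mathbb Z_p]$ for every such $X$. $R_S$ is a commutative ring with unit $1=[S\times\mathbb Z_p]$ and multiplication $[X]\cdot[Y]=[X\times_S Y]$, where $X\times_S Y=\{(s,x,y): s\in S, x\in X_s, y\in Y_s\}$; integers are identified with their images in $R_S$. Angular component: for $x\in\mathbb Q_p^\times$, $\mathrm{ac}(x)=xp^{-v(x)}\bmod p\mathbb Z_p\in\mathbb F_p$, and $\mathrm{ac}(0)=0$; $v$ is the $p$-adic valuation, and $v(x)=(v(x_1),\dots,v(x_n))$ for tuples. For $\Lambda\subseteq S\times\mathbb Z^n$ (definable after identifying $\mathbb Z$ with the value group), $P(\Lambda)\subseteq S\times\mathbb Q_p^n$ is given by $P(\Lambda)_s=\{x\in\mathbb Q_p^n:\mathrm{ac}(x_1)=\dots=\mathrm{ac}(x_n)=1,\ v(x)\in\Lambda_s\}$. *)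

theory Defs
  imports "HOL-Analysis.Analysis"
begin

text \<open>We work in an arbitrary field 'k with a map v : 'k -> int, read as the
p-adic valuation on nonzero elements (the value at 0 is irrelevant and never used).
The predicate padic_field p v says that ('k, v) is a complete discretely valued
field of characteristic 0 with v(p) = 1 and residue field F_p; such a valued
field is (uniquely) isomorphic to Q_p with its p-adic valuation.\<close>

definition vclose :: "('k::field \<Rightarrow> int) \<Rightarrow> int \<Rightarrow> 'k \<Rightarrow> 'k \<Rightarrow> bool" where
  "vclose v N a b \<longleftrightarrow> a = b \<or> v (a - b) \<ge> N"

definition padic_field :: "nat \<Rightarrow> ('k::field \<Rightarrow> int) \<Rightarrow> bool" where
  "padic_field p v \<longleftrightarrow>
     prime p
   \<and> (\<forall>n::nat. n > 0 \<longrightarrow> (of_nat n :: 'k) \<noteq> 0)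
   \<and> (\<forall>x y. x \<noteq> 0 \<longrightarrow> y \<noteq> 0 \<longrightarrow> v (x * y) = v x + v y)
   \<and> (\<forall>x y. x \<noteq> 0 \<longrightarrow> y \<noteq> 0 \<longrightarrow> x + y \<noteq> 0 \<longrightarrow> v (x + y) \<ge> min (v x) (v y))
   \<and> v (of_nat p) = 1
   \<and> (\<forall>x. x \<noteq> 0 \<longrightarrow> v x \<ge> 0 \<longrightarrow> (\<exists>k<p. vclose v 1 x (of_nat k)))
   \<and> (\<forall>f :: nat \<Rightarrow> 'k. (\<forall>N. \<exists>M. \<forall>i\<ge>M. \<forall>j\<ge>M. vclose v N (f i) (f j))
        \<longrightarrow> (\<exists>a. \<forall>N. \<exists>M. \<forall>i\<ge>M. vclose v N (f i) a))"

definition valring :: "('k::field \<Rightarrow> int) \<Rightarrow> 'k set" where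
  "valring v = {x. x = 0 \<or> v x \<ge> 0}"

text \<open>ac(x) = 1 (for x nonzero): x * p^(-v x) is congruent to 1 modulo p O.\<close>
definition ac_one :: "nat \<Rightarrow> ('k::field \<Rightarrow> int) \<Rightarrow> 'k \<Rightarrow> bool" where
  "ac_one p v x \<longleftrightarrow> x \<noteq> 0 \<and> vclose v 1 (x * (of_nat p) powi (- v x)) 1"

definition pabs :: "nat \<Rightarrow> ('k::field \<Rightarrow> int) \<Rightarrow> 'k \<Rightarrow> real" where
  "pabs p v a = (if a = 0 then 0 else real p powr (- real_of_int (v a)))"

definition pnorm :: "nat \<Rightarrow> ('k::field \<Rightarrow> int) \<Rightarrow> 'k list \<Rightarrow> real" where
  "pnorm p v xs = foldr max (map (pabs p v) xs) 0"

datatype tm = Var nat | Cst int | Add tm tm | Mul tm tm | Minus tm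

datatype fm = Eq tm tm | InO tm | Not fm | Conj fm fm | Ex nat fm

primrec eval_tm :: "(nat \<Rightarrow> 'k::field) \<Rightarrow> tm \<Rightarrow> 'k" where
  "eval_tm e (Var i) = e i"
| "eval_tm e (Cst c) = of_int c"
| "eval_tm e (Add s t) = eval_tm e s + eval_tm e t"
| "eval_tm e (Mul s t) = eval_tm e s * eval_tm e t"
| "eval_tm e (Minus s) = - eval_tm e s"

primrec sat :: "('k::field \<Rightarrow> int) \<Rightarrow> (nat \<Rightarrow> 'k) \<Rightarrow> fm \<Rightarrow> bool" where
  "sat v e (Eq s t) = (eval_tm e s = eval_tm e t)"
| "sat v e (InO t) = (eval_tm e t \<in> valring v)"
| "sat v e (Not f) = (\<not> sat v e f)"
| "sat v e (Conj f g) = (sat v e f \<and> sat v e g)"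
| "sat v e (Ex i f) = (\<exists>a. sat v (e(i := a)) f)"

text \<open>Points of K^n are lists of length n.  A set A \<subseteq> K^n is L-definable if it is
defined by a parameter-free formula whose variables 0..n-1 are the coordinates
(all other variables are set to the definable constant 0).\<close>
definition definable :: "('k::field \<Rightarrow> int) \<Rightarrow> nat \<Rightarrow> 'k list set \<Rightarrow> bool" where
  "definable v n A \<longleftrightarrow> A \<subseteq> {xs. length xs = n} \<and>
     (\<exists>\<phi>. \<forall>xs. length xs = n \<longrightarrow> (xs \<in> A \<longleftrightarrow> sat v (\<lambda>i. if i < n then xs ! i else 0) \<phi>))"

definition fibre :: "('a \<times> 'b) set \<Rightarrow> 'a \<Rightarrow> 'b set" where
  "fibre X s = {x. (s, x) \<in> X}"

definition pball :: "('k::field \<Rightarrow> int) \<Rightarrow> nat \<Rightarrow> 'k list \<Rightarrow> int \<Rightarrow> 'k list set" where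
  "pball v n c k = {y. length y = n \<and> (\<forall>i<n. vclose v k (y ! i) (c ! i))}"

text \<open>Haar measure on K^n, normalised by mu(O^n) = 1, as outer measure: the
ball c + p^k O^n has measure p^(-k n).\<close>
definition haar :: "nat \<Rightarrow> ('k::field \<Rightarrow> int) \<Rightarrow> nat \<Rightarrow> 'k list set \<Rightarrow> ennreal" where
  "haar p v n A = (INF ck \<in> {(c, k). (\<forall>i. length (c i) = n) \<and> A \<subseteq> (\<Union>i. pball v n (c i) (k i))}.
      (\<Sum>i. ennreal (real p powr (- real_of_int (snd ck i) * real n))))"

definition popen :: "('k::field \<Rightarrow> int) \<Rightarrow> nat \<Rightarrow> 'k list set \<Rightarrow> bool" where
  "popen v n U \<longleftrightarrow> U \<subseteq> {xs. length xs = n} \<and> (\<forall>x\<in>U. \<exists>k. pball v n x k \<subseteq> U)"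

definition has_interior :: "('k::field \<Rightarrow> int) \<Rightarrow> nat \<Rightarrow> 'k list set \<Rightarrow> bool" where
  "has_interior v n A \<longleftrightarrow> (\<exists>x\<in>A. \<exists>k. pball v n x k \<subseteq> A)"

definition dim_ge :: "('k::field \<Rightarrow> int) \<Rightarrow> nat \<Rightarrow> 'k list set \<Rightarrow> nat \<Rightarrow> bool" where
  "dim_ge v n A d \<longleftrightarrow> (\<exists>I. distinct I \<and> length I = d \<and> (\<forall>i\<in>set I. i < n) \<and>
      has_interior v d ((\<lambda>xs. map (\<lambda>i. xs ! i) I) ` A))"

definition pdim :: "('k::field \<Rightarrow> int) \<Rightarrow> nat \<Rightarrow> 'k list set \<Rightarrow> int" where
  "pdim v n A = (if A = {} then -1 else int (GREATEST d. dim_ge v n A d))"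

definition det_n :: "nat \<Rightarrow> (nat \<Rightarrow> nat \<Rightarrow> 'k::field) \<Rightarrow> 'k" where
  "det_n n M = (\<Sum>\<sigma> \<in> {\<sigma>. \<sigma> permutes {..<n}}. of_int (sign \<sigma>) * (\<Prod>i<n. M i (\<sigma> i)))"

definition mat_app :: "nat \<Rightarrow> (nat \<Rightarrow> nat \<Rightarrow> 'k::field) \<Rightarrow> 'k list \<Rightarrow> 'k list" where
  "mat_app n M xs = map (\<lambda>j. \<Sum>i<n. M j i * xs ! i) [0..<n]"

definition list_diff :: "'k::field list \<Rightarrow> 'k list \<Rightarrow> 'k list" where
  "list_diff xs ys = map2 (-) xs ys"

definition C1_with_jac :: "nat \<Rightarrow> ('k::field \<Rightarrow> int) \<Rightarrow> nat \<Rightarrow> 'k list set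
     \<Rightarrow> ('k list \<Rightarrow> 'k list) \<Rightarrow> ('k list \<Rightarrow> nat \<Rightarrow> nat \<Rightarrow> 'k) \<Rightarrow> bool" where
  "C1_with_jac p v n U f D \<longleftrightarrow>
     (\<forall>x\<in>U. \<forall>\<epsilon>>0. \<exists>\<delta>>0. \<forall>y\<in>U. pnorm p v (list_diff y x) < \<delta> \<longrightarrow>
        pnorm p v (list_diff (list_diff (f y) (f x)) (mat_app n (D x) (list_diff y x)))
          \<le> \<epsilon> * pnorm p v (list_diff y x))
   \<and> (\<forall>x\<in>U. \<forall>i<n. \<forall>j<n. \<forall>\<epsilon>>0. \<exists>\<delta>>0. \<forall>y\<in>U. pnorm p v (list_diff y x) < \<delta> \<longrightarrow>
        pabs p v (D y i j - D x i j) < \<epsilon>)"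

section \<open>The ring R_S (as the free abelian group modulo relations R1--R4)\<close>

definition admissible :: "nat \<Rightarrow> ('k::field \<Rightarrow> int) \<Rightarrow> nat \<Rightarrow> 'k list set \<Rightarrow> nat
     \<Rightarrow> ('k list \<times> 'k list) set \<Rightarrow> bool" where
  "admissible p v m S n X \<longleftrightarrow>
     X \<subseteq> {(s, x). s \<in> S \<and> length x = n}
   \<and> definable v (m + n) ((\<lambda>(s, x). s @ x) ` X)
   \<and> (\<forall>s\<in>S. haar p v n (fibre X s) < top)"

type_synonym 'k gen = "nat \<times> ('k list \<times> 'k list) set"

text \<open>Elements of the free abelian group on symbols: finitely supported maps to int;
gsym (n, X) is the basis element [X] for X \<subseteq> S \<times> K^n.\<close>
definition gsym :: "'k gen \<Rightarrow> ('k gen \<Rightarrow> int)" where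
  "gsym a = (\<lambda>b. if b = a then 1 else 0)"

definition fam_times_O :: "('k::field \<Rightarrow> int) \<Rightarrow> ('k list \<times> 'k list) set \<Rightarrow> ('k list \<times> 'k list) set" where
  "fam_times_O v X = {(s, x @ [z]) | s x z. (s, x) \<in> X \<and> z \<in> valring v}"

inductive_set rel_subgroup :: "nat \<Rightarrow> ('k::field \<Rightarrow> int) \<Rightarrow> nat \<Rightarrow> 'k list set
    \<Rightarrow> ('k gen \<Rightarrow> int) set"
  for p v m S where
  zero: "(\<lambda>_. 0) \<in> rel_subgroup p v m S"
| diff: "a \<in> rel_subgroup p v m S \<Longrightarrow> b \<in> rel_subgroup p v m S \<Longrightarrow>
     (\<lambda>g. a g - b g) \<in> rel_subgroup p v m S"
| R1: "admissible p v m S n X1 \<Longrightarrow> admissible p v m S n X2 \<Longrightarrow> X1 \<inter> X2 = {} \<Longrightarrow>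
     (\<lambda>g. gsym (n, X1 \<union> X2) g - gsym (n, X1) g - gsym (n, X2) g) \<in> rel_subgroup p v m S"
| R2: "admissible p v m S n X \<Longrightarrow> (\<forall>s\<in>S. pdim v n (fibre X s) < int n) \<Longrightarrow>
     gsym (n, X) \<in> rel_subgroup p v m S"
| R3: "admissible p v m S n X \<Longrightarrow> admissible p v m S n Y \<Longrightarrow>
     definable v (m + n + n) {s @ x @ \<phi> s x | s x. (s, x) \<in> X} \<Longrightarrow>
     (\<forall>s\<in>S. bij_betw (\<phi> s) (fibre X s) (fibre Y s)
        \<and> popen v n (fibre X s) \<and> popen v n (fibre Y s)
        \<and> (\<exists>D. C1_with_jac p v n (fibre X s) (\<phi> s) D
              \<and> (\<forall>x\<in>fibre X s. pabs p v (det_n n (D x)) = 1))) \<Longrightarrow>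
     (\<lambda>g. gsym (n, X) g - gsym (n, Y) g) \<in> rel_subgroup p v m S"
| R4: "admissible p v m S n X \<Longrightarrow>
     (\<lambda>g. gsym (n, X) g - gsym (Suc n, fam_times_O v X) g) \<in> rel_subgroup p v m S"

definition Pset :: "nat \<Rightarrow> ('k::field \<Rightarrow> int) \<Rightarrow> ('k list \<times> int list) set
     \<Rightarrow> ('k list \<times> 'k list) set" where
  "Pset p v \<Lambda> = {(s, x). \<exists>l. (s, l) \<in> \<Lambda> \<and> length x = length l \<and>
       (\<forall>i<length x. ac_one p v (x ! i) \<and> v (x ! i) = l ! i)}"

definition Delta :: "nat \<Rightarrow> int list set" where
  "Delta n = {replicate n (int l) | l. True}"

text \<open>The unit 1 = [S \<times> Z_p] of R_S.\<close>
definition unit_fam :: "('k::field \<Rightarrow> int) \<Rightarrow> 'k list set \<Rightarrow> ('k list \<times> 'k list) set" where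
  "unit_fam v S = {(s, [z]) | s z. s \<in> S \<and> z \<in> valring v}"

end

theory Submission
  imports Defs "HOL-Number_Theory.Residues"
begin

text \<open>Write O for the valuation ring.  Every nonzero x \<in> O^n can be written as
x = t (b + p z) with t a power of p, z \<in> O^n and b \<in> {0, ..., p - 1}^n nonzero,
and b is uniquely determined.  Hence O^n is the disjoint union of the point 0 and
p^n - 1 definable open cells Q_b, and Q_(1,...,1) is the fibre of P(S \<times> \<Delta>_n).
The elementary row operations x_i \<mapsto> d x_i + c x_j with integers c, d and d prime to p act
transitively on the nonzero residue vectors b modulo p; they map Q_b bijectively onto
Q_b' with Jacobian determinant d, a p-adic unit, so all cells have the same class by R3.
Thus [S \<times> O^n] = [S \<times> {0}] + (p^n - 1) [P(S \<times> \<Delta>_n)], where [S \<times> {0}] = 0 by R2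
and [S \<times> O^n] = [S \<times> O] = 1 by R4.\<close>

section \<open>Definable sets in blocks of variables\<close>

text \<open>definable evaluates its formula with all variables beyond the coordinates set to 0.
Replacing those free variables by the constant 0 gives a formula that ignores the rest of
the environment, so that it can be conjoined with formulas about further variables.\<close>

fun zero_outside_tm :: "nat \<Rightarrow> nat set \<Rightarrow> tm \<Rightarrow> tm" where
  "zero_outside_tm N B (Var i) = (if i < N \<or> i \<in> B then Var i else Cst 0)"
| "zero_outside_tm N B (Cst c) = Cst c"
| "zero_outside_tm N B (Add s t) = Add (zero_outside_tm N B s) (zero_outside_tm N B t)"
| "zero_outside_tm N B (Mul s t) = Mul (zero_outside_tm N B s) (zero_outside_tm N B t)"
| "zero_outside_tm N B (Minus s) = Minus (zero_outside_tm N B s)"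

fun zero_outside_fm :: "nat \<Rightarrow> nat set \<Rightarrow> fm \<Rightarrow> fm" where
  "zero_outside_fm N B (Eq s t) = Eq (zero_outside_tm N B s) (zero_outside_tm N B t)"
| "zero_outside_fm N B (InO t) = InO (zero_outside_tm N B t)"
| "zero_outside_fm N B (Not f) = Not (zero_outside_fm N B f)"
| "zero_outside_fm N B (Conj f g) = Conj (zero_outside_fm N B f) (zero_outside_fm N B g)"
| "zero_outside_fm N B (Ex i f) = Ex i (zero_outside_fm N (insert i B) f)"

lemma eval_zero_outside_tm:
  "eval_tm e (zero_outside_tm N B t) = eval_tm (\<lambda>i. if i < N \<or> i \<in> B then e i else 0) t"
  by (induction t) auto

lemma sat_zero_outside_fm:
  "sat v e (zero_outside_fm N B f) = sat v (\<lambda>i. if i < N \<or> i \<in> B then e i else 0) f"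
proof (induction f arbitrary: e B)
  case (Ex i f)
  have "(\<lambda>j. if j < N \<or> j \<in> insert i B then (e(i := a)) j else 0)
      = (\<lambda>j. if j < N \<or> j \<in> B then e j else 0)(i := a)" for a
    by (auto simp: fun_eq_iff)
  then show ?case using Ex.IH by simp
qed (auto simp: eval_zero_outside_tm)

lemma definable_sat_iff:
  assumes "definable v m S"
  shows "\<exists>\<psi>. \<forall>e. sat v e \<psi> \<longleftrightarrow> map e [0..<m] \<in> S"
proof -
  obtain \<phi> where phi: "\<forall>xs. length xs = m \<longrightarrow> (xs \<in> S \<longleftrightarrow> sat v (\<lambda>i. if i < m then xs ! i else 0) \<phi>)"
    using assms unfolding definable_def by blast
  have "sat v e (zero_outside_fm m {} \<phi>) \<longleftrightarrow> map e [0..<m] \<in> S" for e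
  proof -
    have "(\<lambda>i. if i < m \<or> i \<in> {} then e i else 0) = (\<lambda>i. if i < m then map e [0..<m] ! i else 0)"
      by (auto simp: fun_eq_iff)
    then show ?thesis using phi[rule_format, of "map e [0..<m]"] by (simp add: sat_zero_outside_fm)
  qed
  then show ?thesis by blast
qed

definition fm_true :: fm where
  "fm_true = Eq (Cst 0) (Cst 0)"

definition fm_or :: "fm \<Rightarrow> fm \<Rightarrow> fm" where
  "fm_or f g = Not (Conj (Not f) (Not g))"

definition fm_conjs :: "fm list \<Rightarrow> fm" where
  "fm_conjs fs = foldr Conj fs fm_true"

definition fm_disjs :: "fm list \<Rightarrow> fm" where
  "fm_disjs fs = foldr fm_or fs (Not fm_true)"

fun tm_power :: "tm \<Rightarrow> nat \<Rightarrow> tm" where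
  "tm_power t 0 = Cst 1"
| "tm_power t (Suc k) = Mul t (tm_power t k)"

lemma sat_fm_true [simp]: "sat v e fm_true"
  by (simp add: fm_true_def)

lemma sat_fm_or [simp]: "sat v e (fm_or f g) \<longleftrightarrow> sat v e f \<or> sat v e g"
  by (simp add: fm_or_def)

lemma sat_fm_conjs [simp]: "sat v e (fm_conjs fs) \<longleftrightarrow> (\<forall>f\<in>set fs. sat v e f)"
  unfolding fm_conjs_def by (induction fs) auto

lemma sat_fm_disjs [simp]: "sat v e (fm_disjs fs) \<longleftrightarrow> (\<exists>f\<in>set fs. sat v e f)"
  unfolding fm_disjs_def by (induction fs) auto

lemma eval_tm_power [simp]: "eval_tm e (tm_power t k) = eval_tm e t ^ k"
  by (induction k) auto

text \<open>The variables m, ..., m + n - 1 are those following the coordinates of the parameter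
space S \<subseteq> K^m.\<close>

definition definable_block :: "('k::field \<Rightarrow> int) \<Rightarrow> nat \<Rightarrow> nat \<Rightarrow> 'k list set \<Rightarrow> bool" where
  "definable_block v m n F \<longleftrightarrow> (\<exists>\<psi>. \<forall>e. sat v e \<psi> \<longleftrightarrow> map (\<lambda>a. e (m + a)) [0..<n] \<in> F)"

lemma definable_block_empty: "definable_block v m n {}"
  unfolding definable_block_def by (intro exI[of _ "Not fm_true"]) simp

lemma definable_block_Un:
  assumes "definable_block v m n F" and "definable_block v m n G"
  shows "definable_block v m n (F \<union> G)"
proof -
  obtain \<phi> \<psi> where "\<forall>e. sat v e \<phi> \<longleftrightarrow> map (\<lambda>a. e (m + a)) [0..<n] \<in> F"
    and "\<forall>e. sat v e \<psi> \<longleftrightarrow> map (\<lambda>a. e (m + a)) [0..<n] \<in> G"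
    using assms unfolding definable_block_def by blast
  then show ?thesis unfolding definable_block_def by (intro exI[of _ "fm_or \<phi> \<psi>"]) simp
qed

lemma definable_block_UN:
  "finite B \<Longrightarrow> (\<And>b. b \<in> B \<Longrightarrow> definable_block v m n (F b)) \<Longrightarrow> definable_block v m n (\<Union>b\<in>B. F b)"
  by (induction B rule: finite_induct) (auto intro: definable_block_Un definable_block_empty)

definition valring_pow :: "('k::field \<Rightarrow> int) \<Rightarrow> nat \<Rightarrow> 'k list set" where
  "valring_pow v n = {x. length x = n \<and> (\<forall>a<n. x ! a \<in> valring v)}"

lemma definable_block_valring_pow: "definable_block v m n (valring_pow v n)"
  unfolding definable_block_def valring_pow_def
  by (intro exI[of _ "fm_conjs (map (\<lambda>a. InO (Var (m + a))) [0..<n])"]) auto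

lemma definable_block_zero: "definable_block v m n {replicate n 0}"
proof -
  have "(\<forall>a<n. e (m + a) = 0) \<longleftrightarrow> map (\<lambda>a. e (m + a)) [0..<n] = replicate n 0" for e :: "nat \<Rightarrow> 'a"
    by (auto simp: list_eq_iff_nth_eq)
  then show ?thesis unfolding definable_block_def
    by (intro exI[of _ "fm_conjs (map (\<lambda>a. Eq (Var (m + a)) (Cst 0)) [0..<n])"]) (auto simp: atLeast0LessThan)
qed

lemma definable_Times:
  assumes S: "definable v m S" and F: "definable_block v m n F" and F_len: "F \<subseteq> {xs. length xs = n}"
  shows "definable v (m + n) ((\<lambda>(s, x). s @ x) ` (S \<times> F))"
proof -
  have S_len: "S \<subseteq> {xs. length xs = m}" using S unfolding definable_def by blast
  obtain \<psi> where psi: "\<forall>e. sat v e \<psi> \<longleftrightarrow> map e [0..<m] \<in> S" using definable_sat_iff[OF S] by blast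
  obtain \<phi> where phi: "\<forall>e. sat v e \<phi> \<longleftrightarrow> map (\<lambda>a. e (m + a)) [0..<n] \<in> F"
    using F unfolding definable_block_def by blast
  have image_iff: "xs \<in> (\<lambda>(s, x). s @ x) ` (S \<times> F) \<longleftrightarrow> take m xs \<in> S \<and> drop m xs \<in> F"
    if "length xs = m + n" for xs
  proof
    assume "take m xs \<in> S \<and> drop m xs \<in> F"
    moreover have "xs = (\<lambda>(s, x). s @ x) (take m xs, drop m xs)" by simp
    ultimately show "xs \<in> (\<lambda>(s, x). s @ x) ` (S \<times> F)" by blast
  qed (use S_len in force)
  show ?thesis unfolding definable_def
  proof (intro conjI exI[of _ "Conj \<psi> \<phi>"] allI impI)
    show "(\<lambda>(s, x). s @ x) ` (S \<times> F) \<subseteq> {xs. length xs = m + n}" using S_len F_len by force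
    fix xs :: "'a list" assume l: "length xs = m + n"
    have "map (\<lambda>i. if i < m + n then xs ! i else 0) [0..<m] = take m xs"
      and "map (\<lambda>a. if m + a < m + n then xs ! (m + a) else 0) [0..<n] = drop m xs"
      using l by (auto simp: list_eq_iff_nth_eq)
    then show "xs \<in> (\<lambda>(s, x). s @ x) ` (S \<times> F) \<longleftrightarrow> sat v (\<lambda>i. if i < m + n then xs ! i else 0) (Conj \<psi> \<phi>)"
      using image_iff[OF l] psi phi by simp
  qed
qed

section \<open>Elementary row operations\<close>

text \<open>x_i is replaced by d x_i + c x_j.  With the side condition j = i \<longrightarrow> c = 0 used
throughout, elem_op_inv inverts it whenever d is invertible.\<close>

definition elem_op :: "nat \<Rightarrow> nat \<Rightarrow> int \<Rightarrow> int \<Rightarrow> 'a::ring_1 list \<Rightarrow> 'a list" where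
  "elem_op i j d c x = x[i := of_int d * x ! i + of_int c * x ! j]"

definition elem_op_inv :: "nat \<Rightarrow> nat \<Rightarrow> int \<Rightarrow> int \<Rightarrow> 'a::field list \<Rightarrow> 'a list" where
  "elem_op_inv i j d c y = y[i := (y ! i - of_int c * y ! j) / of_int d]"

definition elem_matrix :: "nat \<Rightarrow> nat \<Rightarrow> int \<Rightarrow> int \<Rightarrow> nat \<Rightarrow> nat \<Rightarrow> 'a::ring_1" where
  "elem_matrix i j d c a b =
     (if a = b then (if a = i then of_int d else 1) else if a = i \<and> b = j then of_int c else 0)"

lemma length_elem_op [simp]: "length (elem_op i j d c x) = length x"
  by (simp add: elem_op_def)

lemma length_elem_op_inv [simp]: "length (elem_op_inv i j d c x) = length x"
  by (simp add: elem_op_inv_def)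

lemma nth_elem_op:
  "i < length x \<Longrightarrow> elem_op i j d c x ! a = (if a = i then of_int d * x ! i + of_int c * x ! j else x ! a)"
  by (simp add: elem_op_def)

lemma elem_op_inv_elem_op:
  assumes "i < length x" "j < length x" "j = i \<longrightarrow> c = 0" "(of_int d :: 'a::field) \<noteq> 0"
  shows "elem_op_inv i j d c (elem_op i j d c (x :: 'a list)) = x"
proof -
  have cx: "of_int c * elem_op i j d c x ! j = of_int c * x ! j"
    using assms by (cases "j = i") (auto simp: elem_op_def)
  show ?thesis unfolding elem_op_inv_def cx using assms by (simp add: elem_op_def)
qed

lemma elem_op_elem_op_inv:
  assumes "i < length y" "j < length y" "j = i \<longrightarrow> c = 0" "(of_int d :: 'a::field) \<noteq> 0"
  shows "elem_op i j d c (elem_op_inv i j d c (y :: 'a list)) = y"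
proof -
  have cy: "of_int c * elem_op_inv i j d c y ! j = of_int c * y ! j"
    using assms by (cases "j = i") (auto simp: elem_op_inv_def)
  show ?thesis unfolding elem_op_def cy using assms by (simp add: elem_op_inv_def)
qed

lemma sum_elem_matrix:
  assumes a: "a < n" and j: "j < n" and c: "j = i \<longrightarrow> c = 0"
  shows "(\<Sum>b<n. elem_matrix i j d c a b * w b) =
           (if a = i then of_int d * w i + of_int c * w j else w a)"
proof (cases "a = i \<and> j \<noteq> i")
  case True
  have "(\<Sum>b<n. elem_matrix i j d c a b * w b)
      = (\<Sum>b<n. (if a = b then of_int d * w a else 0) + (if j = b then of_int c * w j else 0))"
    by (rule sum.cong[OF refl]) (use True in \<open>auto simp: elem_matrix_def\<close>)
  also have "\<dots> = of_int d * w a + of_int c * w j"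
    using a j by (simp add: sum.distrib)
  finally show ?thesis using True by simp
next
  case False
  have "(\<Sum>b<n. elem_matrix i j d c a b * w b)
      = (\<Sum>b<n. if a = b then (if a = i then of_int d else 1) * w a else 0)"
    by (rule sum.cong[OF refl]) (use False in \<open>auto simp: elem_matrix_def\<close>)
  then show ?thesis using False a c by auto
qed

lemma det_elem_matrix:
  assumes i: "i < n"
  shows "det_n n (elem_matrix i j d c) = (of_int d :: 'a::field)"
proof -
  let ?M = "elem_matrix i j d c :: nat \<Rightarrow> nat \<Rightarrow> 'a"
  have vanish: "(\<Prod>a<n. ?M a (\<sigma> a)) = 0" if \<sigma>: "\<sigma> permutes {..<n}" "\<sigma> \<noteq> id" for \<sigma>
  proof -
    have "\<exists>a<n. a \<noteq> i \<and> \<sigma> a \<noteq> a"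
    proof (rule ccontr)
      assume "\<not> (\<exists>a<n. a \<noteq> i \<and> \<sigma> a \<noteq> a)"
      then have fix_other: "\<sigma> a = a" if "a \<noteq> i" for a
        using permutes_not_in[OF \<sigma>(1)] that by (cases "a < n") auto
      have "\<sigma> i = i"
      proof (rule ccontr)
        assume "\<sigma> i \<noteq> i"
        then have "\<sigma> (\<sigma> i) = \<sigma> i" using fix_other by blast
        then show False using \<open>\<sigma> i \<noteq> i\<close> permutes_inj[OF \<sigma>(1)] by (simp add: inj_eq)
      qed
      then have "\<sigma> x = id x" for x using fix_other by (cases "x = i") auto
      then have "\<sigma> = id" by (rule ext)
      then show False using \<sigma>(2) by contradiction
    qed
    then obtain a where a: "a < n" "a \<noteq> i" "\<sigma> a \<noteq> a" by blast
    then have "?M a (\<sigma> a) = 0" unfolding elem_matrix_def by auto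
    then show ?thesis using a by (intro prod_zero) auto
  qed
  have "det_n n ?M = (\<Sum>\<sigma>\<in>{\<sigma>. \<sigma> permutes {..<n}}.
      if \<sigma> = id then of_int (sign \<sigma>) * (\<Prod>a<n. ?M a (\<sigma> a)) else 0)"
    unfolding det_n_def by (rule sum.cong) (auto simp: vanish)
  also have "\<dots> = of_int (sign (id :: nat \<Rightarrow> nat)) * (\<Prod>a<n. ?M a a)"
    using permutes_id[of "{..<n}"] finite_permutations[of "{..<n}"] by simp
  also have "(\<Prod>a<n. ?M a a) = (\<Prod>a<n. if a = i then of_int d else 1)"
    unfolding elem_matrix_def by simp
  also have "\<dots> = of_int d" using i by simp
  finally show ?thesis by (simp add: sign_id)
qed

lemma pnorm_nonneg: "pnorm p v xs \<ge> 0"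
  unfolding pnorm_def by (induction xs) (auto simp: le_max_iff_disj)

lemma pnorm_eq_0: "(\<forall>a<length xs. xs ! a = 0) \<Longrightarrow> pnorm p v xs = 0"
proof (induction xs)
  case (Cons x xs)
  then have "x = 0" "\<forall>a<length xs. xs ! a = 0" by auto
  then show ?case using Cons.IH pnorm_nonneg[of p v xs] by (simp add: pnorm_def pabs_def)
qed (simp add: pnorm_def)

lemma length_list_diff [simp]: "length (list_diff xs ys) = min (length xs) (length ys)"
  by (simp add: list_diff_def)

lemma nth_list_diff: "a < length xs \<Longrightarrow> a < length ys \<Longrightarrow> list_diff xs ys ! a = xs ! a - ys ! a"
  by (simp add: list_diff_def)

lemma length_mat_app [simp]: "length (mat_app n M w) = n"
  by (simp add: mat_app_def)

lemma nth_mat_app: "a < n \<Longrightarrow> mat_app n M w ! a = (\<Sum>b<n. M a b * w ! b)"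
  by (simp add: mat_app_def)

text \<open>The operation is linear, so its Jacobian is the constant matrix
elem_matrix and the first-order remainder vanishes identically.\<close>

lemma C1_elem_op:
  assumes U: "U \<subseteq> {xs. length xs = n}" and i: "i < n" and j: "j < n" and c: "j = i \<longrightarrow> c = 0"
  shows "C1_with_jac p v n U (elem_op i j d c) (\<lambda>x. elem_matrix i j d c)"
  unfolding C1_with_jac_def
proof (intro conjI ballI allI impI)
  fix x e assume x: "x \<in> U" and e: "(e::real) > 0"
  let ?R = "\<lambda>y. list_diff (list_diff (elem_op i j d c y) (elem_op i j d c x))
      (mat_app n (elem_matrix i j d c) (list_diff y x))"
  have remainder: "?R y ! a = 0" if y: "y \<in> U" and a: "a < n" for y a
  proof -
    have l: "length x = n" "length y = n" using x y U by auto
    then have diff: "list_diff y x ! b = y ! b - x ! b" if "b < n" for b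
      using that by (simp add: nth_list_diff)
    have "(\<Sum>b<n. elem_matrix i j d c a b * list_diff y x ! b)
        = (if a = i then of_int d * (y ! i - x ! i) + of_int c * (y ! j - x ! j) else y ! a - x ! a)"
      using sum_elem_matrix[OF a j c, of d "\<lambda>b. list_diff y x ! b"] diff[OF i] diff[OF j] diff[OF a]
      by simp
    moreover have "?R y ! a = (elem_op i j d c y ! a - elem_op i j d c x ! a)
        - (\<Sum>b<n. elem_matrix i j d c a b * list_diff y x ! b)"
      using a l by (simp add: nth_list_diff nth_mat_app)
    ultimately show ?thesis
      using a i l by (cases "a = i") (simp_all add: nth_elem_op algebra_simps)
  qed
  have "pnorm p v (?R y) = 0" if "y \<in> U" for y
    by (rule pnorm_eq_0) (use remainder[OF that] x that U in auto)
  then show "\<exists>\<delta>>0. \<forall>y\<in>U. pnorm p v (list_diff y x) < \<delta> \<longrightarrow>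
        pnorm p v (?R y) \<le> e * pnorm p v (list_diff y x)"
    using e by (intro exI[of _ 1]) (auto intro!: mult_nonneg_nonneg simp: pnorm_nonneg)
next
  fix x a b e assume "(e::real) > 0"
  then show "\<exists>\<delta>>0. \<forall>y\<in>U. pnorm p v (list_diff y x) < \<delta> \<longrightarrow>
      pabs p v (elem_matrix i j d c a b - elem_matrix i j d c a b) < e"
    by (intro exI[of _ 1]) (simp add: pabs_def)
qed

lemma mem_graph_iff:
  assumes "S \<subseteq> {xs. length xs = m}" "F \<subseteq> {xs. length xs = n}" "\<And>x. x \<in> F \<Longrightarrow> length (f x) = n"
  shows "xs \<in> {s @ x @ f x | s x. (s, x) \<in> S \<times> F} \<longleftrightarrow>
     length xs = m + n + n \<and> take m xs \<in> S \<and> take n (drop m xs) \<in> F \<and> drop (m + n) xs = f (take n (drop m xs))"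
proof
  assume "xs \<in> {s @ x @ f x | s x. (s, x) \<in> S \<times> F}"
  then obtain s x where "xs = s @ x @ f x" "s \<in> S" "x \<in> F" by auto
  then show "length xs = m + n + n \<and> take m xs \<in> S \<and> take n (drop m xs) \<in> F \<and> drop (m + n) xs = f (take n (drop m xs))"
    using assms by force
next
  assume h: "length xs = m + n + n \<and> take m xs \<in> S \<and> take n (drop m xs) \<in> F \<and> drop (m + n) xs = f (take n (drop m xs))"
  have "xs = take m xs @ take n (drop m xs) @ drop (m + n) xs"
    by (metis append_take_drop_id add.commute drop_drop)
  then have "xs = take m xs @ take n (drop m xs) @ f (take n (drop m xs))" using h by simp
  then show "xs \<in> {s @ x @ f x | s x. (s, x) \<in> S \<times> F}" using h by blast
qed

lemma definable_graph_elem_op: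
  assumes S: "definable v m S" and F: "definable_block v m n F" and F_len: "F \<subseteq> {xs. length xs = n}"
    and i: "i < n" and j: "j < n"
  shows "definable v (m + n + n) {s @ x @ elem_op i j d c x | s x. (s, x) \<in> S \<times> F}"
proof -
  have S_len: "S \<subseteq> {xs. length xs = m}" using S unfolding definable_def by blast
  obtain \<psi> where psi: "\<forall>e. sat v e \<psi> \<longleftrightarrow> map e [0..<m] \<in> S" using definable_sat_iff[OF S] by blast
  obtain \<phi> where phi: "\<forall>e. sat v e \<phi> \<longleftrightarrow> map (\<lambda>a. e (m + a)) [0..<n] \<in> F"
    using F unfolding definable_block_def by blast
  define \<gamma> where "\<gamma> = fm_conjs (map (\<lambda>a. Eq (Var (m + n + a))
     (if a = i then Add (Mul (Cst d) (Var (m + i))) (Mul (Cst c) (Var (m + j))) else Var (m + a))) [0..<n])"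
  have F_len': "\<And>x. x \<in> F \<Longrightarrow> length (elem_op i j d c x) = n" using F_len by auto
  show ?thesis unfolding definable_def
  proof (intro conjI exI[of _ "Conj \<psi> (Conj \<phi> \<gamma>)"] allI impI)
    show "{s @ x @ elem_op i j d c x | s x. (s, x) \<in> S \<times> F} \<subseteq> {xs. length xs = m + n + n}"
      using S_len F_len by force
    fix xs :: "'a list" assume l: "length xs = m + n + n"
    define e where "e = (\<lambda>i. if i < m + n + n then xs ! i else (0::'a))"
    have "map e [0..<m] = take m xs" and "map (\<lambda>a. e (m + a)) [0..<n] = take n (drop m xs)"
      using l by (auto simp: list_eq_iff_nth_eq e_def)
    moreover have "sat v e \<gamma> \<longleftrightarrow> drop (m + n) xs = elem_op i j d c (take n (drop m xs))"
    proof -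
      have "sat v e \<gamma> \<longleftrightarrow> (\<forall>a<n. xs ! (m + n + a) =
           (if a = i then of_int d * xs ! (m + i) + of_int c * xs ! (m + j) else xs ! (m + a)))"
        unfolding \<gamma>_def e_def using l i j by (auto simp: atLeast0LessThan)
      also have "\<dots> \<longleftrightarrow> drop (m + n) xs = elem_op i j d c (take n (drop m xs))"
        unfolding elem_op_def using l i j by (auto simp: list_eq_iff_nth_eq nth_list_update)
      finally show ?thesis .
    qed
    ultimately have "sat v e (Conj \<psi> (Conj \<phi> \<gamma>)) \<longleftrightarrow> take m xs \<in> S \<and> take n (drop m xs) \<in> F
        \<and> drop (m + n) xs = elem_op i j d c (take n (drop m xs))"
      using psi phi by simp
    then show "xs \<in> {s @ x @ elem_op i j d c x | s x. (s, x) \<in> S \<times> F} \<longleftrightarrow>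
        sat v (\<lambda>i. if i < m + n + n then xs ! i else 0) (Conj \<psi> (Conj \<phi> \<gamma>))"
      using mem_graph_iff[OF S_len F_len F_len', where xs = xs] l by (simp add: e_def[symmetric])
  qed
qed

section \<open>Arithmetic of the valuation\<close>

lemma dvd_eq_0_if_abs_less: "(q::int) dvd d \<Longrightarrow> \<bar>d\<bar> < q \<Longrightarrow> d = 0"
  using dvd_imp_le_int[of d q] by (cases "d = 0") auto

locale padic_valuation =
  fixes p :: nat and v :: "'k::field \<Rightarrow> int"
  assumes padic_field: "padic_field p v"
begin

lemma padic_field_valuation_properties:
  "prime p \<and> (\<forall>n::nat. n > 0 \<longrightarrow> (of_nat n :: 'k) \<noteq> 0)
   \<and> (\<forall>x y. x \<noteq> 0 \<longrightarrow> y \<noteq> 0 \<longrightarrow> v (x * y) = v x + v y)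
   \<and> (\<forall>x y. x \<noteq> 0 \<longrightarrow> y \<noteq> 0 \<longrightarrow> x + y \<noteq> 0 \<longrightarrow> v (x + y) \<ge> min (v x) (v y))
   \<and> v (of_nat p) = 1
   \<and> (\<forall>x. x \<noteq> 0 \<longrightarrow> v x \<ge> 0 \<longrightarrow> (\<exists>k<p. vclose v 1 x (of_nat k)))"
  using padic_field unfolding padic_field_def by (elim conjE) (intro conjI; assumption)

lemma prime_p: "prime p"
  and of_nat_neq_0: "n > 0 \<Longrightarrow> (of_nat n :: 'k) \<noteq> 0"
  and v_mult: "x \<noteq> 0 \<Longrightarrow> y \<noteq> 0 \<Longrightarrow> v (x * y) = v x + v y"
  and v_add: "x \<noteq> 0 \<Longrightarrow> y \<noteq> 0 \<Longrightarrow> x + y \<noteq> 0 \<Longrightarrow> v (x + y) \<ge> min (v x) (v y)"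
  and v_p: "v (of_nat p) = 1"
  and residue_exists: "x \<noteq> 0 \<Longrightarrow> v x \<ge> 0 \<Longrightarrow> \<exists>k<p. vclose v 1 x (of_nat k)"
  using padic_field_valuation_properties by simp_all

lemma p_ge_2: "p \<ge> 2"
  using prime_p by (simp add: prime_ge_2_nat)

lemma p_neq_0: "(of_nat p :: 'k) \<noteq> 0"
  using of_nat_neq_0 p_ge_2 by simp

lemma v_one: "v 1 = 0"
  using v_mult[of 1 1] by simp

lemma v_uminus:
  assumes "x \<noteq> 0"
  shows "v (- x) = v x"
proof -
  have "v (-1) = 0" using v_mult[of "-1" "-1"] v_one by simp
  then show ?thesis using v_mult[of "-1" x] assms by simp
qed

lemma v_inverse: "x \<noteq> 0 \<Longrightarrow> v (inverse x) = - v x"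
  using v_mult[of x "inverse x"] v_one by simp

lemma v_divide: "x \<noteq> 0 \<Longrightarrow> y \<noteq> 0 \<Longrightarrow> v (x / y) = v x - v y"
  by (simp add: divide_inverse v_mult v_inverse)

lemma v_power: "x \<noteq> 0 \<Longrightarrow> v (x ^ k) = int k * v x"
  by (induction k) (simp_all add: v_one v_mult algebra_simps)

lemma v_p_power: "v ((of_nat p :: 'k) ^ k) = int k"
  using v_power[OF p_neq_0] v_p by simp

lemma v_p_power_int: "v ((of_nat p :: 'k) powi k) = k"
proof (cases "k \<ge> 0")
  case True
  then show ?thesis using v_p_power[of "nat k"] by (simp add: power_int_def)
next
  case False
  have "(of_nat p :: 'k) powi k = inverse (of_nat p) ^ nat (- k)"
    using False unfolding power_int_def by simp
  then show ?thesis
    using False v_power[of "inverse (of_nat p :: 'k)" "nat (- k)"] v_inverse[OF p_neq_0] v_p p_neq_0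
    by simp
qed

text \<open>vge k x means x \<in> p^k O; unlike k \<le> v x it holds for x = 0, where v is junk.\<close>

definition vge :: "int \<Rightarrow> 'k \<Rightarrow> bool" where
  "vge k x \<longleftrightarrow> x = 0 \<or> k \<le> v x"

lemma vge_0 [simp]: "vge k 0"
  by (simp add: vge_def)

lemma vge_add: "vge k x \<Longrightarrow> vge k y \<Longrightarrow> vge k (x + y)"
  unfolding vge_def using v_add[of x y]
  by (cases "x = 0"; cases "y = 0"; cases "x + y = 0") auto

lemma vge_uminus_iff [simp]: "vge k (- x) \<longleftrightarrow> vge k x"
  by (cases "x = 0") (auto simp: vge_def v_uminus)

lemma vge_diff: "vge k x \<Longrightarrow> vge k y \<Longrightarrow> vge k (x - y)"
  using vge_add[of k x "- y"] by simp

lemma vge_mult: "vge a x \<Longrightarrow> vge b y \<Longrightarrow> vge (a + b) (x * y)"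
  unfolding vge_def by (cases "x = 0 \<or> y = 0") (auto simp: v_mult)

lemma vge_mono: "a \<le> b \<Longrightarrow> vge b x \<Longrightarrow> vge a x"
  unfolding vge_def by auto

lemma valring_iff_vge: "x \<in> valring v \<longleftrightarrow> vge 0 x"
  by (simp add: valring_def vge_def)

lemma vclose_iff_vge: "vclose v k a b \<longleftrightarrow> vge k (a - b)"
  by (simp add: vclose_def vge_def)

lemma vge_v: "x \<noteq> 0 \<Longrightarrow> vge (v x) x"
  by (simp add: vge_def)

lemma vge_one: "vge 0 1"
  by (simp add: vge_def v_one)

lemma vge_of_nat: "vge 0 (of_nat n)"
  by (induction n) (auto intro: vge_add vge_one)

lemma vge_of_int: "vge 0 (of_int z)"
proof (cases "z \<ge> 0")
  case True
  then show ?thesis using vge_of_nat[of "nat z"] by simp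
next
  case False
  then have "(of_int z :: 'k) = - of_nat (nat (- z))" by simp
  then show ?thesis using vge_of_nat[of "nat (- z)"] by simp
qed

lemma vge_p: "vge 1 (of_nat p)"
  by (simp add: vge_def v_p)

lemma vge_power: "vge 0 x \<Longrightarrow> vge 0 (x ^ k)"
  by (induction k) (auto intro: vge_one dest: vge_mult)

lemma vge_p_power: "vge (int k) ((of_nat p :: 'k) ^ k)"
  by (simp add: vge_def v_p_power)

lemma vge_p_mult: "vge k x \<Longrightarrow> vge (k + 1) (of_nat p * x)"
  using vge_mult[OF vge_p, of k x] by (simp add: add.commute)

lemma vge_mult_nonzero: "vge k x \<Longrightarrow> y \<noteq> 0 \<Longrightarrow> vge (k + v y) (x * y)"
  using vge_mult[of k x "v y" y] vge_v by auto

lemma vge_divide: "vge (k + v y) x \<Longrightarrow> y \<noteq> 0 \<Longrightarrow> vge k (x / y)"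
  by (cases "x = 0") (auto simp: vge_def v_divide)

lemma vge_divide_p: "vge (k + 1) x \<Longrightarrow> vge k (x / of_nat p)"
  using vge_divide[of k "of_nat p" x] p_neq_0 v_p by simp

lemma vge_p_of_int_iff: "vge 1 (of_int z :: 'k) \<longleftrightarrow> int p dvd z"
proof
  assume z: "vge 1 (of_int z :: 'k)"
  show "int p dvd z"
  proof (rule ccontr)
    assume "\<not> int p dvd z"
    then have "coprime (int p) z"
      using prime_p by (simp add: prime_imp_coprime_int prime_nat_iff_prime)
    then obtain a b where ab: "a * int p + b * z = 1"
      using bezout_int[of "int p" z] by auto
    have "vge 1 (of_int a * of_nat p + of_int b * of_int z :: 'k)"
      using vge_add[OF vge_mult[OF vge_of_int vge_p] vge_mult[OF vge_of_int z]] by simp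
    then have "vge 1 (of_int (a * int p + b * z) :: 'k)" by simp
    then show False using ab by (simp add: vge_def v_one)
  qed
next
  assume "int p dvd z"
  then obtain q where "z = int p * q" by blast
  then show "vge 1 (of_int z :: 'k)" using vge_mult[OF vge_p vge_of_int[of q]] by simp
qed

lemma unit_iff_vge: "x \<noteq> 0 \<and> v x = 0 \<longleftrightarrow> vge 0 x \<and> \<not> vge 1 x"
  by (auto simp: vge_def)

lemma v_of_int_eq_0: "\<not> int p dvd z \<Longrightarrow> (of_int z :: 'k) \<noteq> 0 \<and> v (of_int z) = 0"
  using vge_of_int[of z] vge_p_of_int_iff[of z] unit_iff_vge by blast

lemma pabs_of_int_eq_1: "\<not> int p dvd d \<Longrightarrow> pabs p v (of_int d :: 'k) = 1"
  using v_of_int_eq_0[of d] p_ge_2 by (simp add: pabs_def)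

lemma v_of_int_plus_p_mult_eq_0:
  assumes "\<not> int p dvd c" and "vge 0 z"
  shows "(of_int c + of_nat p * z :: 'k) \<noteq> 0 \<and> v (of_int c + of_nat p * z) = 0"
proof -
  have pz: "vge 1 (of_nat p * z)" using vge_p_mult[OF assms(2)] by simp
  have "vge 0 (of_int c + of_nat p * z)"
    using vge_add[OF vge_of_int vge_mono[OF _ pz]] by simp
  moreover have "\<not> vge 1 (of_int c + of_nat p * z)"
    using vge_diff[OF _ pz, of "of_int c + of_nat p * z"] assms(1) vge_p_of_int_iff by auto
  ultimately show ?thesis using unit_iff_vge by blast
qed

lemma residue: "vge 0 x \<Longrightarrow> \<exists>k<p. vge 1 (x - of_nat k)"
proof (cases "x = 0")
  case True
  then show ?thesis using p_ge_2 by (intro exI[of _ 0]) auto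
next
  case False
  assume "vge 0 x"
  then show ?thesis using residue_exists[OF False] False by (auto simp: vge_def vclose_iff_vge)
qed

end

section \<open>The cells Q_b\<close>

context padic_valuation
begin

text \<open>The powers of p do not form a definable set (it is infinite and discrete).  The scales
are a definable substitute: they include every power of p and, by Fermat's little theorem,
all have angular component 1.\<close>

definition scale :: "'k \<Rightarrow> bool" where
  "scale t \<longleftrightarrow> t \<noteq> 0 \<and> vge 0 t \<and> (\<exists>y. \<exists>j<p - 1. t = of_nat p ^ j * y ^ (p - 1))"

lemma scale_p_power: "scale ((of_nat p :: 'k) ^ l)"
proof -
  define q j where "q = l div (p - 1)" and "j = l mod (p - 1)"
  have "l = j + q * (p - 1)" unfolding q_def j_def using mod_div_mult_eq[of l "p - 1"] by simp
  then have "(of_nat p :: 'k) ^ l = of_nat p ^ j * (of_nat p ^ q) ^ (p - 1)"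
    by (metis power_add power_mult mult.commute)
  moreover have "j < p - 1" unfolding j_def using p_ge_2 by simp
  moreover have "vge 0 ((of_nat p :: 'k) ^ l)" using vge_p_power[of l] vge_mono[of 0 "int l"] by simp
  ultimately show ?thesis unfolding scale_def using p_neq_0 by auto
qed

lemma vge_power_diff: "vge 0 a \<Longrightarrow> vge 0 b \<Longrightarrow> vge 1 (a - b) \<Longrightarrow> vge 1 (a ^ k - b ^ k)"
proof (induction k)
  case (Suc k)
  have "a ^ Suc k - b ^ Suc k = a * (a ^ k - b ^ k) + b ^ k * (a - b)"
    by (simp add: algebra_simps)
  moreover have "vge (0 + 1) (a * (a ^ k - b ^ k))" using vge_mult[OF Suc.prems(1) Suc.IH[OF Suc.prems]] .
  moreover have "vge (0 + 1) (b ^ k * (a - b))" using vge_mult[OF vge_power[OF Suc.prems(2)] Suc.prems(3)] .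
  ultimately show ?case by (simp add: vge_add)
qed simp

lemma ac_one_iff: "ac_one p v x \<longleftrightarrow> x \<noteq> 0 \<and> vge 1 (x * of_nat p powi (- v x) - 1)"
  by (simp add: ac_one_def vclose_iff_vge)

lemma unit_part: "y \<noteq> 0 \<Longrightarrow> y * of_nat p powi (- v y) \<noteq> 0 \<and> v (y * of_nat p powi (- v y)) = 0"
  using v_mult[of y "of_nat p powi (- v y)"] v_p_power_int p_neq_0 by (simp add: power_int_not_zero)

lemma fermat_unit:
  assumes "u \<noteq> 0" and "v u = 0"
  shows "vge 1 (u ^ (p - 1) - 1)"
proof -
  have u0: "vge 0 u" using assms by (simp add: vge_def)
  obtain k where k: "k < p" "vge 1 (u - of_nat k)" using residue[OF u0] by blast
  have "k \<noteq> 0"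
  proof
    assume "k = 0"
    then have "vge 1 u" using k(2) by simp
    then show False using assms by (simp add: vge_def)
  qed
  then have "\<not> p dvd k" using k by (auto dest: dvd_imp_le)
  then have "[k ^ (p - 1) = 1] (mod p)" using fermat_theorem prime_p by blast
  then have "int p dvd int (k ^ (p - 1)) - 1"
    by (metis cong_iff_dvd_diff cong_int_iff of_nat_1 of_nat_power)
  then have "vge 1 ((of_nat k :: 'k) ^ (p - 1) - 1)"
    using vge_p_of_int_iff[of "int (k ^ (p - 1)) - 1"] by simp
  moreover have "vge 1 (u ^ (p - 1) - of_nat k ^ (p - 1))"
    by (rule vge_power_diff[OF u0 vge_of_nat k(2)])
  ultimately show ?thesis using vge_add by fastforce
qed

lemma ac_one_scale:
  assumes "scale t"
  shows "ac_one p v t"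
proof -
  obtain y j where t0: "t \<noteq> 0" and t: "t = of_nat p ^ j * y ^ (p - 1)"
    using assms unfolding scale_def by blast
  have y: "y \<noteq> 0" using t t0 p_ge_2 by (cases "y = 0") auto
  define u where "u = y * of_nat p powi (- v y)"
  have u: "u \<noteq> 0" "v u = 0" using unit_part[OF y] unfolding u_def by auto
  have vt: "v t = int j + int (p - 1) * v y"
    using t y p_neq_0 v_mult[of "of_nat p ^ j" "y ^ (p - 1)"] v_p_power v_power[OF y] by simp
  have "t * of_nat p powi (- v t) = u ^ (p - 1)"
  proof -
    have "(of_nat p :: 'k) powi (- v t) = of_nat p powi (- int j + - (int (p - 1) * v y))"
      by (simp add: vt)
    also have "\<dots> = of_nat p powi (- int j) * of_nat p powi (- (int (p - 1) * v y))"
      by (rule power_int_add) (simp add: p_neq_0)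
    finally have "t * of_nat p powi (- v t)
        = of_nat p ^ j * y ^ (p - 1) * (of_nat p powi (- int j) * of_nat p powi (- (int (p - 1) * v y)))"
      unfolding t by simp
    also have "of_nat p powi (- (int (p - 1) * v y)) = (of_nat p powi (- v y) :: 'k) ^ (p - 1)"
      by (simp add: power_int_power' mult.commute)
    also have "(of_nat p :: 'k) powi (- int j) = inverse (of_nat p ^ j)"
      by (simp add: power_int_minus)
    finally show ?thesis unfolding u_def using p_neq_0 by (simp add: power_mult_distrib field_simps)
  qed
  then show ?thesis unfolding ac_one_iff using t0 fermat_unit[OF u] by simp
qed

lemma ac_one_diff:
  assumes "ac_one p v t" and "ac_one p v t'" and "v t = v t'"
  shows "vge (1 + v t) (t' - t)"
proof -
  define P where "P = (of_nat p :: 'k) powi (v t)"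
  define u u' where "u = t * of_nat p powi (- v t)" and "u' = t' * of_nat p powi (- v t)"
  have P: "P \<noteq> 0" "v P = v t" unfolding P_def using p_neq_0 v_p_power_int by (auto simp: power_int_not_zero)
  have tt: "t = u * P" "t' = u' * P"
    using P(1) unfolding u_def u'_def P_def by (simp_all add: power_int_minus field_simps)
  have "vge 1 (u' - u)"
    using assms vge_diff[of 1 "t' * of_nat p powi (- v t') - 1" "t * of_nat p powi (- v t) - 1"]
    unfolding ac_one_iff u_def u'_def by simp
  then have "vge (1 + v P) ((u' - u) * P)" using vge_mult_nonzero P(1) by blast
  then show ?thesis using tt P(2) by (simp add: algebra_simps)
qed

text \<open>Q_b consists of the x \<in> t (b + p O^n) with t a scale: dividing x by the largest power
of p dividing all its coordinates leaves a vector congruent to b modulo p.\<close>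

definition cell :: "nat \<Rightarrow> int list \<Rightarrow> 'k list set" where
  "cell n b = {x. length x = n \<and>
     (\<exists>t. scale t \<and> (\<forall>a<n. \<exists>z. vge 0 z \<and> x ! a = t * (of_int (b ! a) + of_nat p * z)))}"

definition nonzero_residues :: "nat \<Rightarrow> int list set" where
  "nonzero_residues n = {b. length b = n \<and> (\<forall>a<n. 0 \<le> b ! a \<and> b ! a < int p) \<and> (\<exists>a<n. b ! a \<noteq> 0)}"

lemma length_cell: "x \<in> cell n b \<Longrightarrow> length x = n"
  unfolding cell_def by simp

lemma nonzero_residues_not_dvd:
  assumes "b \<in> nonzero_residues n" and "a < n" and "b ! a \<noteq> 0"
  shows "\<not> int p dvd b ! a"
proof
  assume "int p dvd b ! a"
  moreover have "0 < b ! a" "b ! a < int p" using assms unfolding nonzero_residues_def by auto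
  ultimately show False by (auto dest: zdvd_imp_le)
qed

lemma vge_scale_mult:
  assumes "scale t" and "vge 0 z"
  shows "vge (v t) (t * (of_int c + of_nat p * z))"
proof -
  have "vge 0 (of_int c + of_nat p * z)"
    using vge_add[OF vge_of_int vge_mono[OF _ vge_p_mult[OF assms(2)]]] by simp
  then have "vge (0 + v t) ((of_int c + of_nat p * z) * t)"
    using vge_mult_nonzero assms(1) unfolding scale_def by blast
  then show ?thesis by (simp add: mult.commute)
qed

lemma v_scale_mult:
  assumes "scale t" and "vge 0 z" and "\<not> int p dvd c"
  shows "t * (of_int c + of_nat p * z) \<noteq> 0 \<and> v (t * (of_int c + of_nat p * z)) = v t"
  using v_of_int_plus_p_mult_eq_0[OF assms(3,2)] v_mult assms(1) unfolding scale_def by auto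

lemma cell_subset_valring_pow: "cell n b \<subseteq> valring_pow v n"
proof
  fix x assume x: "x \<in> cell n b"
  then obtain t where t: "scale t" and z: "\<forall>a<n. \<exists>z. vge 0 z \<and> x ! a = t * (of_int (b ! a) + of_nat p * z)"
    unfolding cell_def by blast
  have "vge 0 t" using t unfolding scale_def by simp
  then have "v t \<ge> 0" using t unfolding scale_def vge_def by simp
  then have "vge 0 (x ! a)" if a: "a < n" for a
  proof -
    obtain y where "vge 0 y" "x ! a = t * (of_int (b ! a) + of_nat p * y)" using z a by blast
    then show ?thesis using vge_mono[OF \<open>v t \<ge> 0\<close>] vge_scale_mult[OF t] by simp
  qed
  then show "x \<in> valring_pow v n" using length_cell[OF x] by (simp add: valring_pow_def valring_iff_vge)
qed

lemma zero_notin_cell: "b \<in> nonzero_residues n \<Longrightarrow> replicate n 0 \<notin> cell n b"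
proof
  assume b: "b \<in> nonzero_residues n" and "replicate n 0 \<in> cell n b"
  moreover obtain a where a: "a < n" "b ! a \<noteq> 0" using b unfolding nonzero_residues_def by blast
  ultimately obtain t z where "scale t" "vge 0 z" "0 = t * (of_int (b ! a) + of_nat p * z)"
    unfolding cell_def by auto
  then show False using v_scale_mult nonzero_residues_not_dvd[OF b a] by metis
qed

lemma dvd_of_scale_mult_eq:
  assumes t: "scale t" "scale t'" "v t = v t'" and z: "vge 0 z" "vge 0 z'"
    and eq: "t * (of_int c + of_nat p * z) = t' * (of_int c' + of_nat p * z')"
  shows "int p dvd c - c'"
proof -
  have t0: "t \<noteq> 0" "t' \<noteq> 0" using t unfolding scale_def by auto
  have close: "vge (1 + v t) (t' - t)" using ac_one_diff[OF ac_one_scale ac_one_scale] t by blast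
  have "t * of_int (c - c') = (t' - t) * of_int c' + of_nat p * t' * z' - of_nat p * t * z"
    using eq by (simp add: algebra_simps)
  moreover have "vge (1 + v t) ((t' - t) * of_int c')" using vge_mult[OF close vge_of_int] by simp
  moreover have "vge (1 + v t) (of_nat p * t' * z')"
    using vge_mult[OF vge_mult[OF vge_p vge_v[OF t0(2)]] z(2)] t(3) by simp
  moreover have "vge (1 + v t) (of_nat p * t * z)"
    using vge_mult[OF vge_mult[OF vge_p vge_v[OF t0(1)]] z(1)] by simp
  ultimately have "vge (1 + v t) (of_int (c - c') * t)"
    by (metis vge_add vge_diff mult.commute)
  then have "vge 1 (of_int (c - c') * t / t :: 'k)" using vge_divide[of 1 t] t0 by blast
  then have "vge 1 (of_int (c - c') :: 'k)" using t0 by simp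
  then show ?thesis using vge_p_of_int_iff by blast
qed

lemma v_scale_le:
  assumes b: "b \<in> nonzero_residues n" and s: "scale s" "scale s'"
    and z: "\<forall>a<n. \<exists>z. vge 0 z \<and> x ! a = s * (of_int (b ! a) + of_nat p * z)"
    and z': "\<forall>a<n. \<exists>z. vge 0 z \<and> x ! a = s' * (of_int (b' ! a) + of_nat p * z)"
  shows "v s' \<le> v s"
proof -
  obtain a where a: "a < n" "b ! a \<noteq> 0" using b unfolding nonzero_residues_def by blast
  obtain y where "vge 0 y" "x ! a = s * (of_int (b ! a) + of_nat p * y)" using z a by blast
  then have "x ! a \<noteq> 0" "v (x ! a) = v s"
    using v_scale_mult[OF s(1)] nonzero_residues_not_dvd[OF b a] by auto
  moreover obtain y' where "vge 0 y'" "x ! a = s' * (of_int (b' ! a) + of_nat p * y')" using z' a by blast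
  then have "vge (v s') (x ! a)" using vge_scale_mult[OF s(2)] by simp
  ultimately show ?thesis by (simp add: vge_def)
qed

lemma cell_disjoint:
  assumes b: "b \<in> nonzero_residues n" and b': "b' \<in> nonzero_residues n"
    and x: "x \<in> cell n b" "x \<in> cell n b'"
  shows "b = b'"
proof -
  obtain t where t: "scale t" and z: "\<forall>a<n. \<exists>z. vge 0 z \<and> x ! a = t * (of_int (b ! a) + of_nat p * z)"
    using x(1) unfolding cell_def by blast
  obtain t' where t': "scale t'" and z': "\<forall>a<n. \<exists>z. vge 0 z \<and> x ! a = t' * (of_int (b' ! a) + of_nat p * z)"
    using x(2) unfolding cell_def by blast
  have vt: "v t = v t'" using v_scale_le[OF b t t' z z'] v_scale_le[OF b' t' t z' z] by simp
  show "b = b'"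
  proof (rule nth_equalityI)
    show "length b = length b'" using b b' unfolding nonzero_residues_def by simp
    fix a assume "a < length b"
    then have a: "a < n" using b unfolding nonzero_residues_def by simp
    obtain y y' where "vge 0 y" "vge 0 y'"
      "t * (of_int (b ! a) + of_nat p * y) = t' * (of_int (b' ! a) + of_nat p * y')"
      using z z' a by metis
    then have "int p dvd b ! a - b' ! a" using dvd_of_scale_mult_eq[OF t t' vt] by blast
    moreover have "0 \<le> b ! a \<and> b ! a < int p \<and> 0 \<le> b' ! a \<and> b' ! a < int p"
      using a b b' unfolding nonzero_residues_def by auto
    ultimately show "b ! a = b' ! a" using dvd_eq_0_if_abs_less[of "int p" "b ! a - b' ! a"] by auto
  qed
qed

lemma exists_min_valuation:
  assumes x: "x \<in> valring_pow v n" and nz: "x \<noteq> replicate n 0"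
  obtains l a0 where "l \<ge> 0" "a0 < n" "x ! a0 \<noteq> 0" "v (x ! a0) = l" "\<forall>a<n. vge l (x ! a)"
proof -
  have len: "length x = n" and O: "\<And>a. a < n \<Longrightarrow> vge 0 (x ! a)"
    using x unfolding valring_pow_def valring_iff_vge by auto
  define N where "N = {a. a < n \<and> x ! a \<noteq> 0}"
  have N: "finite N" "N \<noteq> {}" unfolding N_def using nz len by (auto simp: list_eq_iff_nth_eq)
  define l where "l = Min ((\<lambda>a. v (x ! a)) ` N)"
  have "l \<in> (\<lambda>a. v (x ! a)) ` N" using Min_in[of "(\<lambda>a. v (x ! a)) ` N"] N unfolding l_def by blast
  then obtain a0 where a0: "a0 \<in> N" "v (x ! a0) = l" by blast
  have "l \<le> v (x ! a)" if "a \<in> N" for a unfolding l_def using N that by simp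
  then have "vge l (x ! a)" if "a < n" for a using that unfolding N_def vge_def by auto
  moreover have "l \<ge> 0" using a0 O unfolding N_def vge_def by auto
  ultimately show ?thesis using that a0 unfolding N_def by blast
qed

lemma cell_cover:
  assumes x: "x \<in> valring_pow v n" and nz: "x \<noteq> replicate n 0"
  shows "\<exists>b\<in>nonzero_residues n. x \<in> cell n b"
proof -
  have len: "length x = n" using x unfolding valring_pow_def by simp
  obtain l a0 where l: "l \<ge> 0" and a0: "a0 < n" "x ! a0 \<noteq> 0" "v (x ! a0) = l"
    and x_vge: "\<forall>a<n. vge l (x ! a)"
    using exists_min_valuation[OF x nz] by blast
  define t where "t = (of_nat p :: 'k) ^ nat l"
  have t: "scale t" "t \<noteq> 0" "v t = l"
    unfolding t_def using scale_p_power p_neq_0 v_p_power l by auto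
  define y where "y = (\<lambda>a. x ! a / t)"
  have y: "vge 0 (y a)" if "a < n" for a
    using x_vge that t vge_divide[of 0 t "x ! a"] unfolding y_def by simp
  define r where "r = (\<lambda>a. SOME k. k < p \<and> vge 1 (y a - of_nat k))"
  have r: "r a < p \<and> vge 1 (y a - of_nat (r a))" if "a < n" for a
    unfolding r_def using someI_ex[OF residue[OF y[OF that]]] .
  define b where "b = map (\<lambda>a. int (r a)) [0..<n]"
  have "r a0 \<noteq> 0"
  proof
    assume "r a0 = 0"
    moreover have "y a0 \<noteq> 0" "v (y a0) = 0"
      using a0 t unfolding y_def by (auto simp: v_divide)
    ultimately show False using r[OF a0(1)] by (simp add: vge_def)
  qed
  then have "b \<in> nonzero_residues n" unfolding nonzero_residues_def b_def using r a0 by auto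
  moreover have "x \<in> cell n b"
  proof -
    have "\<exists>z. vge 0 z \<and> x ! a = t * (of_int (b ! a) + of_nat p * z)" if a: "a < n" for a
    proof
      define z where "z = (y a - of_nat (r a)) / of_nat p"
      have "vge 0 z" unfolding z_def using vge_divide_p[of 0] r[OF a] by simp
      moreover have "x ! a = t * (of_int (b ! a) + of_nat p * z)"
        unfolding z_def b_def y_def using a t p_neq_0 by (simp add: field_simps)
      ultimately show "vge 0 z \<and> x ! a = t * (of_int (b ! a) + of_nat p * z)" ..
    qed
    then show ?thesis unfolding cell_def using len t by blast
  qed
  ultimately show ?thesis by blast
qed

lemma valring_pow_eq_cells:
  "valring_pow v n = insert (replicate n 0) (\<Union>b\<in>nonzero_residues n. cell n b)"
proof -
  have "replicate n 0 \<in> valring_pow v n" by (simp add: valring_pow_def valring_def)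
  then show ?thesis using cell_cover cell_subset_valring_pow by blast
qed

lemma nonzero_residues_eq: "nonzero_residues n = {xs. set xs \<subseteq> {0..<int p} \<and> length xs = n} - {replicate n 0}"
proof (rule Set.set_eqI)
  fix b :: "int list"
  have "set b \<subseteq> {0..<int p} \<longleftrightarrow> (\<forall>a<length b. 0 \<le> b ! a \<and> b ! a < int p)"
    by (auto simp: set_conv_nth)
  moreover have "length b = n \<Longrightarrow> b \<noteq> replicate n 0 \<longleftrightarrow> (\<exists>a<n. b ! a \<noteq> 0)"
    by (auto simp: list_eq_iff_nth_eq)
  ultimately show "b \<in> nonzero_residues n \<longleftrightarrow> b \<in> {xs. set xs \<subseteq> {0..<int p} \<and> length xs = n} - {replicate n 0}"
    unfolding nonzero_residues_def by auto
qed

lemma finite_nonzero_residues: "finite (nonzero_residues n)"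
  unfolding nonzero_residues_eq using finite_lists_length_eq[of "{0..<int p}" n] by simp

lemma card_nonzero_residues: "card (nonzero_residues n) = p ^ n - 1"
proof -
  have "replicate n 0 \<in> {xs. set xs \<subseteq> {0..<int p} \<and> length xs = n}" using p_ge_2 by auto
  then show ?thesis unfolding nonzero_residues_eq
    using card_lists_length_eq[of "{0..<int p}" n] finite_lists_length_eq[of "{0..<int p}" n]
    by (simp add: card_Diff_singleton)
qed

lemma ac_one_scale_mult_one_plus:
  assumes t: "scale t" and z: "vge 0 z"
  shows "ac_one p v (t * (1 + of_nat p * z)) \<and> v (t * (1 + of_nat p * z)) = v t"
proof -
  have t0: "t \<noteq> 0" using t unfolding scale_def by simp
  define u where "u = t * of_nat p powi (- v t)"
  have u: "vge 1 (u - 1)" "vge 0 u"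
    using ac_one_scale[OF t] unit_part[OF t0] unfolding ac_one_iff u_def by (auto simp: vge_def)
  have x: "t * (1 + of_nat p * z) \<noteq> 0" "v (t * (1 + of_nat p * z)) = v t"
    using v_scale_mult[OF t z, of 1] p_ge_2 by (auto simp: zdvd_not_zless)
  have "t * (1 + of_nat p * z) * of_nat p powi (- v (t * (1 + of_nat p * z))) - 1
      = (u - 1) + u * (of_nat p * z)"
    unfolding x(2) u_def by (simp add: algebra_simps)
  moreover have "vge 1 ((u - 1) + u * (of_nat p * z))"
    using vge_add[OF u(1)] vge_mult[OF u(2) vge_p_mult[OF z]] by simp
  ultimately have "vge 1 (t * (1 + of_nat p * z) * of_nat p powi (- v (t * (1 + of_nat p * z))) - 1)"
    by (simp only:)
  then show ?thesis unfolding ac_one_iff using x by simp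
qed

lemma p_power_mult_one_plus_of_ac_one:
  assumes "ac_one p v y" and "v y = int l"
  shows "\<exists>z. vge 0 z \<and> y = of_nat p ^ l * (1 + of_nat p * z)"
proof -
  define t where "t = (of_nat p :: 'k) ^ l"
  have t0: "t \<noteq> 0" unfolding t_def using p_neq_0 by simp
  have "vge 1 (y * of_nat p powi (- int l) - 1)" using assms unfolding ac_one_iff by auto
  moreover have "(of_nat p :: 'k) powi (- int l) = inverse t" unfolding t_def by (simp add: power_int_minus)
  ultimately have "vge 1 (y / t - 1)" by (simp add: divide_inverse)
  then have "vge 0 ((y / t - 1) / of_nat p)" using vge_divide_p[of 0] by simp
  moreover have "y = t * (1 + of_nat p * ((y / t - 1) / of_nat p))"
    using t0 p_neq_0 by (simp add: field_simps)
  ultimately show ?thesis unfolding t_def by blast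
qed

lemma cell_ones_iff:
  "x \<in> cell n (replicate n 1) \<longleftrightarrow>
     length x = n \<and> (\<exists>l::nat. \<forall>a<n. ac_one p v (x ! a) \<and> v (x ! a) = int l)"
proof
  assume x: "x \<in> cell n (replicate n 1)"
  then obtain t where t: "scale t" and z: "\<forall>a<n. \<exists>z. vge 0 z \<and> x ! a = t * (1 + of_nat p * z)"
    unfolding cell_def by auto
  have "v t \<ge> 0" using t unfolding scale_def vge_def by auto
  have "ac_one p v (x ! a) \<and> v (x ! a) = int (nat (v t))" if a: "a < n" for a
  proof -
    obtain w where "vge 0 w" "x ! a = t * (1 + of_nat p * w)" using z a by blast
    then show ?thesis using ac_one_scale_mult_one_plus[OF t] \<open>v t \<ge> 0\<close> by simp
  qed
  then show "length x = n \<and> (\<exists>l::nat. \<forall>a<n. ac_one p v (x ! a) \<and> v (x ! a) = int l)"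
    using length_cell[OF x] by blast
next
  assume "length x = n \<and> (\<exists>l::nat. \<forall>a<n. ac_one p v (x ! a) \<and> v (x ! a) = int l)"
  then obtain l where len: "length x = n" and l: "\<forall>a<n. ac_one p v (x ! a) \<and> v (x ! a) = int l"
    by blast
  have "\<exists>z. vge 0 z \<and> x ! a = of_nat p ^ l * (1 + of_nat p * z)" if "a < n" for a
    using l that p_power_mult_one_plus_of_ac_one by blast
  then have "\<forall>a<n. \<exists>z. vge 0 z \<and> x ! a = of_nat p ^ l * (of_int (replicate n 1 ! a) + of_nat p * z)"
    by simp
  then show "x \<in> cell n (replicate n 1)" unfolding cell_def using len scale_p_power by blast
qed

lemma mem_cell_iff:
  "x \<in> cell n b \<longleftrightarrow> length x = n \<and>
     (\<exists>t. scale t \<and> (\<forall>a<n. \<exists>z. vge 0 z \<and> x ! a = t * of_int (b ! a) + of_nat p * t * z))"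
  unfolding cell_def by (simp add: algebra_simps)

lemma cell_eq_of_cong:
  assumes "length b = n" "length b' = n" and cong: "\<forall>a<n. int p dvd (b ! a - b' ! a)"
  shows "cell n b = cell n b'"
proof -
  have sub: "cell n b \<subseteq> cell n b'" if "\<forall>a<n. int p dvd (b ! a - b' ! a)" for b b'
  proof
    fix x assume "x \<in> cell n b"
    then obtain t where len: "length x = n" and t: "scale t"
      and z: "\<forall>a<n. \<exists>z. vge 0 z \<and> x ! a = t * of_int (b ! a) + of_nat p * t * z"
      unfolding mem_cell_iff by blast
    have "\<exists>z. vge 0 z \<and> x ! a = t * of_int (b' ! a) + of_nat p * t * z" if a: "a < n" for a
    proof -
      obtain z where z: "vge 0 z" "x ! a = t * of_int (b ! a) + of_nat p * t * z" using z a by blast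
      obtain q where "b ! a = b' ! a + int p * q" using \<open>\<forall>a<n. int p dvd (b ! a - b' ! a)\<close> a
        by (metis dvdE diff_eq_eq add.commute)
      then have "x ! a = t * of_int (b' ! a) + of_nat p * t * (z + of_int q)"
        using z(2) by (simp add: algebra_simps)
      then show ?thesis using vge_add[OF z(1) vge_of_int] by blast
    qed
    then show "x \<in> cell n b'" unfolding mem_cell_iff using len t by blast
  qed
  have "\<forall>a<n. int p dvd (b' ! a - b ! a)" using cong by (metis dvd_minus_iff minus_diff_eq)
  then show ?thesis using sub cong by blast
qed

lemma elem_op_cell:
  assumes i: "i < n" and j: "j < n" and b: "length b = n" and x: "x \<in> cell n b"
  shows "elem_op i j d c x \<in> cell n (elem_op i j d c b)"
proof -
  obtain t where len: "length x = n" and t: "scale t"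
    and z: "\<forall>a<n. \<exists>z. vge 0 z \<and> x ! a = t * of_int (b ! a) + of_nat p * t * z"
    using x unfolding mem_cell_iff by blast
  have "\<exists>z. vge 0 z \<and> elem_op i j d c x ! a = t * of_int (elem_op i j d c b ! a) + of_nat p * t * z"
    if a: "a < n" for a
  proof (cases "a = i")
    case True
    obtain zi where zi: "vge 0 zi" "x ! i = t * of_int (b ! i) + of_nat p * t * zi" using z i by blast
    obtain zj where zj: "vge 0 zj" "x ! j = t * of_int (b ! j) + of_nat p * t * zj" using z j by blast
    have "vge 0 (of_int d * zi + of_int c * zj)"
      using vge_add[OF vge_mult[OF vge_of_int zi(1)] vge_mult[OF vge_of_int zj(1)]] by simp
    moreover have "elem_op i j d c x ! a = t * of_int (elem_op i j d c b ! a) + of_nat p * t * (of_int d * zi + of_int c * zj)"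
      using True i len b by (simp add: nth_elem_op zi(2) zj(2) algebra_simps)
    ultimately show ?thesis by blast
  qed (use z a len b i in \<open>simp add: nth_elem_op\<close>)
  then show ?thesis unfolding mem_cell_iff using t len by auto
qed

lemma elem_op_inv_cell:
  assumes i: "i < n" and j: "j < n" and c: "j = i \<longrightarrow> c = 0" and b: "length b = n"
    and d: "\<not> int p dvd d" and y: "y \<in> cell n (elem_op i j d c b)"
  shows "elem_op_inv i j d c y \<in> cell n b"
proof -
  have d0: "(of_int d :: 'k) \<noteq> 0" "vge 0 (inverse (of_int d :: 'k))"
    using v_of_int_eq_0[OF d] by (auto simp: vge_def v_inverse)
  obtain t where len: "length y = n" and t: "scale t"
    and z: "\<forall>a<n. \<exists>z. vge 0 z \<and> y ! a = t * of_int (elem_op i j d c b ! a) + of_nat p * t * z"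
    using y unfolding mem_cell_iff by blast
  have "\<exists>z. vge 0 z \<and> elem_op_inv i j d c y ! a = t * of_int (b ! a) + of_nat p * t * z"
    if a: "a < n" for a
  proof (cases "a = i")
    case True
    obtain zi where zi: "vge 0 zi" "y ! i = t * of_int (d * b ! i + c * b ! j) + of_nat p * t * zi"
      using z i b by (auto simp: nth_elem_op)
    obtain zj where zj: "vge 0 zj" "y ! j = t * of_int (elem_op i j d c b ! j) + of_nat p * t * zj"
      using z j by blast
    have "of_int c * y ! j = t * of_int (c * b ! j) + of_nat p * t * (of_int c * zj)"
      using zj(2) c b i j by (cases "j = i") (auto simp: nth_elem_op algebra_simps)
    then have "elem_op_inv i j d c y ! a
        = t * of_int (b ! a) + of_nat p * t * ((zi - of_int c * zj) * inverse (of_int d))"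
      using True i len d0(1) zi(2) unfolding elem_op_inv_def by (simp add: field_simps)
    moreover have "vge 0 ((zi - of_int c * zj) * inverse (of_int d))"
    proof -
      have "vge 0 (of_int c * zj)" using vge_mult[OF vge_of_int zj(1)] by simp
      then have "vge 0 (zi - of_int c * zj)" by (rule vge_diff[OF zi(1)])
      then show ?thesis using vge_mult[OF _ d0(2)] by simp
    qed
    ultimately show ?thesis by blast
  next
    case False
    obtain w where "vge 0 w" "y ! a = t * of_int (elem_op i j d c b ! a) + of_nat p * t * w"
      using z a by blast
    then show ?thesis using False a b len i by (auto simp: elem_op_inv_def nth_elem_op)
  qed
  then show ?thesis unfolding mem_cell_iff using t len by auto
qed

lemma bij_betw_elem_op_cell:
  assumes i: "i < n" and j: "j < n" and c: "j = i \<longrightarrow> c = 0" and b: "length b = n"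
    and d: "\<not> int p dvd d"
  shows "bij_betw (elem_op i j d c) (cell n b) (cell n (elem_op i j d c b))"
proof (rule bij_betw_byWitness[where f' = "elem_op_inv i j d c"])
  have d0: "(of_int d :: 'k) \<noteq> 0" using v_of_int_eq_0[OF d] by simp
  show "\<forall>x\<in>cell n b. elem_op_inv i j d c (elem_op i j d c x) = x"
  proof
    fix x assume "x \<in> cell n b"
    then have "length x = n" by (rule length_cell)
    then show "elem_op_inv i j d c (elem_op i j d c x) = x" using i j c d0 by (intro elem_op_inv_elem_op) simp_all
  qed
  show "\<forall>y\<in>cell n (elem_op i j d c b). elem_op i j d c (elem_op_inv i j d c y) = y"
  proof
    fix y assume "y \<in> cell n (elem_op i j d c b)"
    then have "length y = n" by (rule length_cell)
    then show "elem_op i j d c (elem_op_inv i j d c y) = y" using i j c d0 by (intro elem_op_elem_op_inv) simp_all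
  qed
  show "elem_op i j d c ` cell n b \<subseteq> cell n (elem_op i j d c b)"
    using elem_op_cell[OF i j b] by blast
  show "elem_op_inv i j d c ` cell n (elem_op i j d c b) \<subseteq> cell n b"
    using elem_op_inv_cell[OF i j c b d] by blast
qed

lemma popen_cell: "popen v n (cell n b)"
  unfolding popen_def
proof (intro conjI ballI)
  show "cell n b \<subseteq> {xs. length xs = n}" using length_cell by blast
  fix x assume "x \<in> cell n b"
  then obtain t where len: "length x = n" and t: "scale t"
    and z: "\<forall>a<n. \<exists>z. vge 0 z \<and> x ! a = t * of_int (b ! a) + of_nat p * t * z"
    unfolding mem_cell_iff by blast
  have pt: "of_nat p * t \<noteq> 0" "v (of_nat p * t) = v t + 1"
    using t p_neq_0 v_mult[OF p_neq_0] v_p unfolding scale_def by auto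
  have "y \<in> cell n b" if y: "y \<in> pball v n x (v t + 1)" for y
  proof -
    have "\<exists>z. vge 0 z \<and> y ! a = t * of_int (b ! a) + of_nat p * t * z" if a: "a < n" for a
    proof -
      obtain z where z: "vge 0 z" "x ! a = t * of_int (b ! a) + of_nat p * t * z" using z a by blast
      have "vge (0 + v (of_nat p * t)) (y ! a - x ! a)"
        using y a pt(2) unfolding pball_def vclose_iff_vge by simp
      then have "vge 0 ((y ! a - x ! a) / (of_nat p * t))" using vge_divide pt(1) by blast
      moreover have "y ! a = t * of_int (b ! a) + of_nat p * t * (z + (y ! a - x ! a) / (of_nat p * t))"
        using z(2) pt(1) by (simp add: distrib_left)
      ultimately show ?thesis using vge_add[OF z(1)] by blast
    qed
    then show ?thesis unfolding mem_cell_iff using y t unfolding pball_def by blast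
  qed
  then show "\<exists>k. pball v n x k \<subseteq> cell n b" by blast
qed

definition cell_fm :: "nat \<Rightarrow> nat \<Rightarrow> int list \<Rightarrow> fm" where
  "cell_fm m n b = (let T = m + n; Y = Suc (m + n); Z = Suc (Suc (m + n)) in
     Ex T (Ex Y (Conj (Not (Eq (Var T) (Cst 0))) (Conj (InO (Var T))
       (Conj (fm_disjs (map (\<lambda>j. Eq (Var T) (Mul (tm_power (Cst (int p)) j) (tm_power (Var Y) (p - 1)))) [0..<p - 1]))
         (fm_conjs (map (\<lambda>a. Ex Z (Conj (InO (Var Z))
             (Eq (Var (m + a)) (Add (Mul (Var T) (Cst (b ! a))) (Mul (Mul (Cst (int p)) (Var T)) (Var Z))))))
           [0..<n])))))))"

lemma definable_block_cell: "definable_block v m n (cell n b)"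
proof -
  have "sat v e (cell_fm m n b) \<longleftrightarrow> map (\<lambda>a. e (m + a)) [0..<n] \<in> cell n b" for e
  proof -
    have "sat v e (cell_fm m n b) \<longleftrightarrow>
       (\<exists>t y. t \<noteq> 0 \<and> vge 0 t \<and> (\<exists>j<p - 1. t = of_nat p ^ j * y ^ (p - 1)) \<and>
          (\<forall>a<n. \<exists>z. vge 0 z \<and> e (m + a) = t * of_int (b ! a) + of_nat p * t * z))"
      unfolding cell_fm_def Let_def by (auto simp: valring_iff_vge atLeast0LessThan)
    then show ?thesis unfolding mem_cell_iff scale_def by auto
  qed
  then show ?thesis unfolding definable_block_def by blast
qed

section \<open>Measure and dimension\<close>

lemma haar_valring_pow_finite:
  assumes "n \<ge> 1" and "A \<subseteq> valring_pow v n"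
  shows "haar p v n A < Orderings.top"
proof -
  define r where "r = inverse (real p ^ n)"
  have r: "0 \<le> r" "r < 1" unfolding r_def using p_ge_2 assms(1) by (auto simp: inverse_less_1_iff one_less_power)
  have cover: "((\<lambda>i::nat. replicate n (0::'k)), (\<lambda>i::nat. int i))
      \<in> {(c, k). (\<forall>i. length (c i) = n) \<and> A \<subseteq> (\<Union>i. pball v n (c i) (k i))}"
  proof -
    have "A \<subseteq> pball v n (replicate n 0) (int 0)"
      using assms(2) by (auto simp: pball_def vclose_iff_vge valring_pow_def valring_iff_vge)
    also have "\<dots> \<subseteq> (\<Union>i. pball v n (replicate n 0) (int i))" by (rule UN_upper) simp
    finally show ?thesis by simp
  qed
  have "real p powr (- real_of_int (int i) * real n) = r ^ i" for i
  proof -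
    have "real p powr (- real_of_int (int i) * real n) = inverse (real p powr (real (i * n)))"
      by (simp add: powr_minus[symmetric])
    also have "\<dots> = inverse (real p ^ (i * n))"
      using p_ge_2 powr_realpow[of "real p" "i * n"] by simp
    finally have "real p powr (- real_of_int (int i) * real n) = inverse (real p ^ (i * n))" .
    then show ?thesis unfolding r_def by (simp add: power_mult[symmetric] mult.commute power_inverse)
  qed
  then have "(\<Sum>i. ennreal (real p powr (- real_of_int (int i) * real n))) = (\<Sum>i. ennreal (r ^ i))"
    by simp
  also have "\<dots> \<noteq> Orderings.top"
  proof (rule ennreal_suminf_neq_top)
    show "summable (\<lambda>i. r ^ i)" using r by (intro summable_geometric) simp
    show "\<And>i. 0 \<le> r ^ i" using r by simp
  qed
  finally have "(\<Sum>i. ennreal (real p powr (- real_of_int (int i) * real n))) < Orderings.top"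
    using top.not_eq_extremum by blast
  moreover have "haar p v n A \<le> (\<Sum>i. ennreal (real p powr (- real_of_int (int i) * real n)))"
    using INF_lower[OF cover, of "\<lambda>ck. \<Sum>i. ennreal (real p powr (- real_of_int (snd ck i) * real n))"]
    unfolding haar_def by simp
  ultimately show ?thesis by (simp add: le_less_trans)
qed

lemma pdim_singleton: "pdim v n {z} = 0"
proof -
  have dim_ge_0: "dim_ge v n {z} 0"
    unfolding dim_ge_def has_interior_def pball_def by (intro exI[of _ "[]"]) auto
  have "d = 0" if dim: "dim_ge v n {z} d" for d
  proof (rule ccontr)
    assume d: "d \<noteq> 0"
    obtain I where I: "length I = d" and "has_interior v d ((\<lambda>xs. map (\<lambda>i. xs ! i) I) ` {z})"
      using dim unfolding dim_ge_def by blast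
    then obtain k where k: "pball v d (map (\<lambda>i. z ! i) I) k \<subseteq> {map (\<lambda>i. z ! i) I}"
      unfolding has_interior_def by auto
    define w where "w = map (\<lambda>i. z ! i) I"
    define y where "y = w[0 := w ! 0 + of_nat p powi k]"
    have pk: "(of_nat p :: 'k) powi k \<noteq> 0" using p_neq_0 by (simp add: power_int_not_zero)
    have "y \<in> pball v d w k" and "y \<noteq> w"
      using I d pk v_p_power_int unfolding pball_def vclose_iff_vge y_def w_def
      by (auto simp: nth_list_update vge_def dest: arg_cong[of _ _ "\<lambda>l. l ! 0"])
    then show False using k unfolding w_def by blast
  qed
  then have "(GREATEST d. dim_ge v n {z} d) = 0"
    using dim_ge_0 by (intro Greatest_equality) auto
  then show ?thesis unfolding pdim_def by simp
qed

end

section \<open>Transitivity of elementary operations on nonzero residue vectors\<close>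

inductive elem_reachable :: "nat \<Rightarrow> nat \<Rightarrow> int list \<Rightarrow> int list \<Rightarrow> bool" for p n where
  refl: "elem_reachable p n b b"
| step: "elem_reachable p n b w \<Longrightarrow> i < n \<Longrightarrow> j < n \<Longrightarrow> (j = i \<longrightarrow> c = 0) \<Longrightarrow> \<not> int p dvd d
     \<Longrightarrow> elem_reachable p n b (elem_op i j d c w)"

lemma exists_mult_cong:
  assumes "prime p" and "\<not> int p dvd u"
  shows "\<exists>c. int p dvd (1 + c * u - r)"
proof -
  have "coprime (int p) u"
    using assms by (simp add: prime_imp_coprime_int prime_nat_iff_prime)
  then obtain x where "[u * x = 1] (mod int p)"
    using cong_solve_coprime_int[of u "int p"] by (auto simp: coprime_commute)
  then have "int p dvd (u * x - 1) * (r - 1)" by (simp add: cong_iff_dvd_diff)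
  then have "int p dvd 1 + (x * (r - 1)) * u - r" by (simp add: algebra_simps)
  then show ?thesis by blast
qed

text \<open>Scale a coordinate k with b_k a unit to b_k, then use it to adjust every other
coordinate of (1, ..., 1) to b_a modulo p.\<close>

lemma elem_reachable_ones_upto:
  assumes p: "prime p" and b: "length b = n" and k: "k < n" "\<not> int p dvd b ! k" and "r \<le> n"
  shows "\<exists>w. elem_reachable p n (replicate n 1) w \<and> length w = n \<and> w ! k = b ! k \<and>
           (\<forall>a<n. a \<noteq> k \<longrightarrow> (if a < r then int p dvd w ! a - b ! a else w ! a = 1))"
  using \<open>r \<le> n\<close>
proof (induction r)
  case 0
  define w where "w = elem_op k k (b ! k) 0 (replicate n (1::int))"
  have "elem_reachable p n (replicate n 1) w"
    unfolding w_def using k by (intro elem_reachable.step[OF elem_reachable.refl]) auto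
  moreover have "length w = n \<and> w ! k = b ! k \<and> (\<forall>a<n. a \<noteq> k \<longrightarrow> w ! a = 1)"
    unfolding w_def using k by (auto simp: nth_elem_op)
  ultimately show ?case by auto
next
  case (Suc r)
  then obtain w where w: "elem_reachable p n (replicate n 1) w" "length w = n" "w ! k = b ! k"
    and inv: "\<forall>a<n. a \<noteq> k \<longrightarrow> (if a < r then int p dvd w ! a - b ! a else w ! a = 1)"
    by auto
  show ?case
  proof (cases "r = k")
    case True
    then show ?thesis using w inv by (auto simp: less_Suc_eq)
  next
    case False
    obtain c where c: "int p dvd (1 + c * b ! k - b ! r)" using exists_mult_cong[OF p k(2)] by blast
    have "r < n" using Suc.prems by simp
    then have "elem_reachable p n (replicate n 1) (elem_op r k 1 c w)"
      using w(1) k(1) False p by (intro elem_reachable.step) (auto simp: prime_gt_1_int)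
    moreover have "w ! r = 1" using inv \<open>r < n\<close> False by auto
    then have "length (elem_op r k 1 c w) = n \<and> elem_op r k 1 c w ! k = b ! k \<and>
        (\<forall>a<n. a \<noteq> k \<longrightarrow> (if a < Suc r then int p dvd elem_op r k 1 c w ! a - b ! a
                              else elem_op r k 1 c w ! a = 1))"
      using w inv c \<open>r < n\<close> False by (auto simp: nth_elem_op less_Suc_eq algebra_simps)
    ultimately show ?thesis by blast
  qed
qed

lemma elem_reachable_ones:
  assumes "prime p" and "length b = n" and "k < n" "\<not> int p dvd b ! k"
  shows "\<exists>w. elem_reachable p n (replicate n 1) w \<and> length w = n \<and> (\<forall>a<n. int p dvd w ! a - b ! a)"
proof -
  obtain w where "elem_reachable p n (replicate n 1) w" "length w = n" "w ! k = b ! k"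
    and "\<forall>a<n. a \<noteq> k \<longrightarrow> int p dvd w ! a - b ! a"
    using elem_reachable_ones_upto[OF assms order_refl] by auto
  then show ?thesis by (metis dvd_0_right diff_self)
qed

section \<open>The ring R_S\<close>

locale padic_family = padic_valuation p v for p :: nat and v :: "'k::field \<Rightarrow> int" +
  fixes S :: "'k list set" and m :: nat
  assumes definable_S: "definable v m S"
begin

definition rs_eq :: "('k gen \<Rightarrow> int) \<Rightarrow> ('k gen \<Rightarrow> int) \<Rightarrow> bool" where
  "rs_eq a b \<longleftrightarrow> (\<lambda>g. a g - b g) \<in> rel_subgroup p v m S"

lemma rel_subgroup_uminus: "a \<in> rel_subgroup p v m S \<Longrightarrow> (\<lambda>g. - a g) \<in> rel_subgroup p v m S"
  using rel_subgroup.diff[OF rel_subgroup.zero] by simp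

lemma rel_subgroup_add:
  "a \<in> rel_subgroup p v m S \<Longrightarrow> b \<in> rel_subgroup p v m S \<Longrightarrow> (\<lambda>g. a g + b g) \<in> rel_subgroup p v m S"
  using rel_subgroup.diff[where a = a and b = "\<lambda>g. - b g"] rel_subgroup_uminus by simp

lemma rs_eq_refl: "rs_eq a a"
  unfolding rs_eq_def using rel_subgroup.zero by simp

lemma rs_eq_sym: "rs_eq a b \<Longrightarrow> rs_eq b a"
  unfolding rs_eq_def using rel_subgroup_uminus by fastforce

lemma rs_eq_trans [trans]: "rs_eq a b \<Longrightarrow> rs_eq b c \<Longrightarrow> rs_eq a c"
  unfolding rs_eq_def using rel_subgroup_add[where a = "\<lambda>g. a g - b g" and b = "\<lambda>g. b g - c g"] by simp

lemma rs_eq_add: "rs_eq a b \<Longrightarrow> rs_eq c d \<Longrightarrow> rs_eq (\<lambda>g. a g + c g) (\<lambda>g. b g + d g)"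
  unfolding rs_eq_def using rel_subgroup_add[where a = "\<lambda>g. a g - b g" and b = "\<lambda>g. c g - d g"]
  by (simp add: algebra_simps)

lemma rs_eq_sum:
  assumes "finite B" and "\<And>x. x \<in> B \<Longrightarrow> rs_eq (f x) (h x)"
  shows "rs_eq (\<lambda>g. \<Sum>x\<in>B. f x g) (\<lambda>g. \<Sum>x\<in>B. h x g)"
  using assms
proof (induction B rule: finite_induct)
  case (insert x B)
  then show ?case using rs_eq_add[of "f x" "h x"] by simp
qed (simp add: rs_eq_refl)

lemma fibre_Times: "s \<in> S \<Longrightarrow> fibre (S \<times> F) s = F"
  unfolding fibre_def by auto

lemma admissible_Times:
  assumes n: "n \<ge> 1" and F: "definable_block v m n F" "F \<subseteq> valring_pow v n"
  shows "admissible p v m S n (S \<times> F)"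
proof -
  have "F \<subseteq> {xs. length xs = n}" using F(2) unfolding valring_pow_def by auto
  then show ?thesis unfolding admissible_def
    using definable_Times[OF definable_S F(1)] haar_valring_pow_finite[OF n F(2)] by (auto simp: fibre_Times)
qed

lemma rs_eq_Un:
  assumes n: "n \<ge> 1" and F: "definable_block v m n F" "F \<subseteq> valring_pow v n"
    and G: "definable_block v m n G" "G \<subseteq> valring_pow v n" and disj: "F \<inter> G = {}"
  shows "rs_eq (gsym (n, S \<times> (F \<union> G))) (\<lambda>g. gsym (n, S \<times> F) g + gsym (n, S \<times> G) g)"
proof -
  have "(\<lambda>g. gsym (n, (S \<times> F) \<union> (S \<times> G)) g - gsym (n, S \<times> F) g - gsym (n, S \<times> G) g)
      \<in> rel_subgroup p v m S"
    using disj by (intro rel_subgroup.R1 admissible_Times[OF n F] admissible_Times[OF n G]) auto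
  then show ?thesis unfolding rs_eq_def Sigma_Un_distrib2[symmetric] by (simp add: algebra_simps)
qed

lemma rs_eq_UN:
  assumes n: "n \<ge> 1" and "finite B"
    and F: "\<And>b. b \<in> B \<Longrightarrow> definable_block v m n (F b)" "\<And>b. b \<in> B \<Longrightarrow> F b \<subseteq> valring_pow v n"
    and disj: "\<And>b b'. b \<in> B \<Longrightarrow> b' \<in> B \<Longrightarrow> b \<noteq> b' \<Longrightarrow> F b \<inter> F b' = {}"
  shows "rs_eq (gsym (n, S \<times> (\<Union>b\<in>B. F b))) (\<lambda>g. \<Sum>b\<in>B. gsym (n, S \<times> F b) g)"
  using assms(2-)
proof (induction B rule: finite_induct)
  case empty
  have "admissible p v m S n (S \<times> {})" using admissible_Times[OF n definable_block_empty] by simp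
  then have "gsym (n, S \<times> {}) \<in> rel_subgroup p v m S"
    using n by (intro rel_subgroup.R2) (auto simp: fibre_def pdim_def)
  then show ?case unfolding rs_eq_def by simp
next
  case (insert x B)
  have U: "definable_block v m n (\<Union>b\<in>B. F b)"
    using definable_block_UN[OF insert.hyps(1)] insert.prems(1) by blast
  have UO: "(\<Union>b\<in>B. F b) \<subseteq> valring_pow v n" using insert.prems(2) by blast
  have disj: "F x \<inter> (\<Union>b\<in>B. F b) = {}" using insert.hyps(2) insert.prems(3) by fastforce
  have "rs_eq (gsym (n, S \<times> (F x \<union> (\<Union>b\<in>B. F b))))
      (\<lambda>g. gsym (n, S \<times> F x) g + gsym (n, S \<times> (\<Union>b\<in>B. F b)) g)"
    by (rule rs_eq_Un[OF n _ _ U UO disj]) (use insert.prems in auto)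
  moreover have "rs_eq (\<lambda>g. gsym (n, S \<times> F x) g + gsym (n, S \<times> (\<Union>b\<in>B. F b)) g)
      (\<lambda>g. gsym (n, S \<times> F x) g + (\<Sum>b\<in>B. gsym (n, S \<times> F b) g))"
    by (rule rs_eq_add[OF rs_eq_refl insert.IH]) (use insert.prems in auto)
  ultimately have "rs_eq (gsym (n, S \<times> (F x \<union> (\<Union>b\<in>B. F b))))
      (\<lambda>g. gsym (n, S \<times> F x) g + (\<Sum>b\<in>B. gsym (n, S \<times> F b) g))"
    by (rule rs_eq_trans)
  then show ?case using insert.hyps by simp
qed

lemma rs_eq_zero_point:
  assumes "n \<ge> 1"
  shows "rs_eq (gsym (n, S \<times> {replicate n 0})) (\<lambda>g. 0)"
proof -
  have "{replicate n 0} \<subseteq> valring_pow v n" by (simp add: valring_pow_def valring_def)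
  then have "gsym (n, S \<times> {replicate n 0}) \<in> rel_subgroup p v m S"
    using assms pdim_singleton
    by (intro rel_subgroup.R2 admissible_Times definable_block_zero) (auto simp: fibre_Times)
  then show ?thesis unfolding rs_eq_def by simp
qed

lemma fam_times_O_valring_pow: "fam_times_O v (S \<times> valring_pow v k) = S \<times> valring_pow v (Suc k)"
proof -
  have "y \<in> valring_pow v (Suc k) \<longleftrightarrow> (\<exists>x z. y = x @ [z] \<and> x \<in> valring_pow v k \<and> z \<in> valring v)" for y
  proof
    assume y: "y \<in> valring_pow v (Suc k)"
    then have len: "length y = Suc k" and O: "\<forall>a<Suc k. y ! a \<in> valring v"
      unfolding valring_pow_def by auto
    then have "y \<noteq> []" by auto
    then have "y = butlast y @ [last y]" by simp
    moreover have "last y = y ! k" using len \<open>y \<noteq> []\<close> by (simp add: last_conv_nth)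
    moreover have "butlast y \<in> valring_pow v k" using len O unfolding valring_pow_def by (auto simp: nth_butlast)
    moreover have "y ! k \<in> valring v" using O by simp
    ultimately show "\<exists>x z. y = x @ [z] \<and> x \<in> valring_pow v k \<and> z \<in> valring v" by metis
  qed (auto simp: valring_pow_def nth_append less_Suc_eq)
  then show ?thesis unfolding fam_times_O_def by auto
qed

lemma rs_eq_unit_valring_pow: "k \<ge> 1 \<Longrightarrow> rs_eq (gsym (1, unit_fam v S)) (gsym (k, S \<times> valring_pow v k))"
proof (induction k rule: dec_induct)
  case base
  have "unit_fam v S = S \<times> valring_pow v 1"
    unfolding unit_fam_def valring_pow_def by (auto simp: length_Suc_conv)
  then show ?case by (simp add: rs_eq_refl)
next
  case (step k)
  have "rs_eq (gsym (k, S \<times> valring_pow v k)) (gsym (Suc k, fam_times_O v (S \<times> valring_pow v k)))"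
    unfolding rs_eq_def
    using step.hyps by (intro rel_subgroup.R4 admissible_Times definable_block_valring_pow) auto
  then show ?case using step.IH rs_eq_trans unfolding fam_times_O_valring_pow by blast
qed

lemma rs_eq_elem_op_cell:
  assumes n: "n \<ge> 1" and i: "i < n" and j: "j < n" and c: "j = i \<longrightarrow> c = 0" and b: "length b = n"
    and d: "\<not> int p dvd d"
  shows "rs_eq (gsym (n, S \<times> cell n b)) (gsym (n, S \<times> cell n (elem_op i j d c b)))"
  unfolding rs_eq_def
proof (rule rel_subgroup.R3[where \<phi> = "\<lambda>s. elem_op i j d c"])
  show "admissible p v m S n (S \<times> cell n b)"
    by (rule admissible_Times[OF n definable_block_cell cell_subset_valring_pow])
  show "admissible p v m S n (S \<times> cell n (elem_op i j d c b))"
    by (rule admissible_Times[OF n definable_block_cell cell_subset_valring_pow])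
  have len: "cell n b \<subseteq> {xs. length xs = n}" using length_cell by blast
  show "definable v (m + n + n) {s @ x @ elem_op i j d c x | s x. (s, x) \<in> S \<times> cell n b}"
    by (rule definable_graph_elem_op[OF definable_S definable_block_cell len i j])
  show "\<forall>s\<in>S. bij_betw (elem_op i j d c) (fibre (S \<times> cell n b) s) (fibre (S \<times> cell n (elem_op i j d c b)) s)
      \<and> popen v n (fibre (S \<times> cell n b) s) \<and> popen v n (fibre (S \<times> cell n (elem_op i j d c b)) s)
      \<and> (\<exists>D. C1_with_jac p v n (fibre (S \<times> cell n b) s) (elem_op i j d c) D
            \<and> (\<forall>x\<in>fibre (S \<times> cell n b) s. pabs p v (det_n n (D x)) = 1))"
    using bij_betw_elem_op_cell[OF i j c b d] popen_cell C1_elem_op[OF len i j c]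
    by (auto simp: fibre_Times det_elem_matrix[OF i] pabs_of_int_eq_1[OF d]
        intro!: exI[of _ "\<lambda>x. elem_matrix i j d c"])
qed

lemma rs_eq_cell_of_reachable:
  assumes "elem_reachable p n b w" and "n \<ge> 1" and "length b = n"
  shows "rs_eq (gsym (n, S \<times> cell n b)) (gsym (n, S \<times> cell n w))"
  using assms
proof (induction rule: elem_reachable.induct)
  case (step b w i j c d)
  have "length w = n"
    using step.hyps(1) step.prems(2) by (induction rule: elem_reachable.induct) auto
  then have "rs_eq (gsym (n, S \<times> cell n w)) (gsym (n, S \<times> cell n (elem_op i j d c w)))"
    using step.hyps step.prems by (intro rs_eq_elem_op_cell) auto
  then show ?case using rs_eq_trans[OF step.IH[OF step.prems]] by blast
qed (simp add: rs_eq_refl)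

lemma rs_eq_cell_ones:
  assumes n: "n \<ge> 1" and b: "b \<in> nonzero_residues n"
  shows "rs_eq (gsym (n, S \<times> cell n (replicate n 1))) (gsym (n, S \<times> cell n b))"
proof -
  obtain k where k: "k < n" "b ! k \<noteq> 0" using b unfolding nonzero_residues_def by blast
  have len: "length b = n" using b unfolding nonzero_residues_def by simp
  obtain w where w: "elem_reachable p n (replicate n 1) w" "length w = n" "\<forall>a<n. int p dvd w ! a - b ! a"
    using elem_reachable_ones[OF prime_p len k(1) nonzero_residues_not_dvd[OF b k]] by blast
  have "cell n w = cell n b" by (rule cell_eq_of_cong[OF w(2) len w(3)])
  then show ?thesis using rs_eq_cell_of_reachable[OF w(1) n] by simp
qed

lemma rs_eq_valring_pow_cells:
  assumes n: "n \<ge> 1"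
  shows "rs_eq (gsym (n, S \<times> valring_pow v n)) (\<lambda>g. \<Sum>b\<in>nonzero_residues n. gsym (n, S \<times> cell n b) g)"
proof -
  let ?U = "\<Union>b\<in>nonzero_residues n. cell n b"
  have zero: "{replicate n 0} \<subseteq> valring_pow v n" by (simp add: valring_pow_def valring_def)
  have U: "definable_block v m n ?U"
    by (rule definable_block_UN[OF finite_nonzero_residues definable_block_cell])
  have U': "?U \<subseteq> valring_pow v n" using cell_subset_valring_pow by blast
  have zero_U: "{replicate n 0} \<inter> ?U = {}" using zero_notin_cell by blast
  have cells_disj: "cell n b \<inter> cell n b' = {}"
    if "b \<in> nonzero_residues n" "b' \<in> nonzero_residues n" "b \<noteq> b'" for b b'
    using cell_disjoint that by blast
  have "rs_eq (gsym (n, S \<times> valring_pow v n))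
      (\<lambda>g. gsym (n, S \<times> {replicate n 0}) g + gsym (n, S \<times> ?U) g)"
    using rs_eq_Un[OF n definable_block_zero zero U U' zero_U]
    unfolding valring_pow_eq_cells by (simp only: Un_insert_left Un_empty_left)
  also have "rs_eq (\<lambda>g. gsym (n, S \<times> {replicate n 0}) g + gsym (n, S \<times> ?U) g)
      (\<lambda>g. 0 + (\<Sum>b\<in>nonzero_residues n. gsym (n, S \<times> cell n b) g))"
    by (rule rs_eq_add[OF rs_eq_zero_point[OF n]
          rs_eq_UN[OF n finite_nonzero_residues definable_block_cell cell_subset_valring_pow cells_disj]])
  finally show ?thesis by simp
qed

lemma Pset_eq_cell_ones: "Pset p v (S \<times> Delta n) = S \<times> cell n (replicate n 1)"
proof (rule Set.set_eqI)
  fix sx :: "'k list \<times> 'k list"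
  obtain s x where sx: "sx = (s, x)" by force
  have "sx \<in> Pset p v (S \<times> Delta n) \<longleftrightarrow>
      s \<in> S \<and> (\<exists>l::nat. length x = n \<and> (\<forall>a<n. ac_one p v (x ! a) \<and> v (x ! a) = int l))"
    unfolding Pset_def Delta_def sx by auto
  then show "sx \<in> Pset p v (S \<times> Delta n) \<longleftrightarrow> sx \<in> S \<times> cell n (replicate n 1)"
    using cell_ones_iff[of x n] sx by auto
qed

end

theorem mainTheorem4:
  fixes p :: nat and v :: "'k::field \<Rightarrow> int" and S :: "'k list set" and m n :: nat
  assumes "padic_field p v"
    and "definable v m S"
    and "n \<ge> 1"
  shows "(\<lambda>g. (int p ^ n - 1) * gsym (n, Pset p v (S \<times> Delta n)) g - gsym (1, unit_fam v S) g)
           \<in> rel_subgroup p v m S"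
proof -
  interpret padic_family p v S m
    using assms(1,2) by unfold_locales
  let ?B = "nonzero_residues n" and ?Q = "\<lambda>b. gsym (n, S \<times> cell n b)"
  have "rs_eq (gsym (1, unit_fam v S)) (gsym (n, S \<times> valring_pow v n))"
    by (rule rs_eq_unit_valring_pow[OF assms(3)])
  also have "rs_eq \<dots> (\<lambda>g. \<Sum>b\<in>?B. ?Q b g)"
    by (rule rs_eq_valring_pow_cells[OF assms(3)])
  also have "rs_eq \<dots> (\<lambda>g. \<Sum>b\<in>?B. ?Q (replicate n 1) g)"
    using rs_eq_cell_ones[OF assms(3)] rs_eq_sym by (intro rs_eq_sum[OF finite_nonzero_residues]) blast
  also have "(\<lambda>g. \<Sum>b\<in>?B. ?Q (replicate n 1) g) = (\<lambda>g. (int p ^ n - 1) * ?Q (replicate n 1) g)"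
    using one_le_power[of p n] p_ge_2 by (simp add: card_nonzero_residues of_nat_diff)
  finally show ?thesis unfolding Pset_eq_cell_ones rs_eq_def[symmetric] by (rule rs_eq_sym)
qed

end
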